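(* Let $\mathcal M$ be an elementary extension of the $\mathcal L$-structure $\mathcal Z$, expanded to an $\mathcal L_P$-structure by interpreting the new unary predicate $P$ as an additively random subset $D$ of $M$ which is symmetric ($a\in D\iff -a\in D$). Then the $\mathcal L_P$-theory of $(\mathcal M,D)$ is supersimple of rank $1$: working in a sufficiently saturated model $\mathbb U$ of this theory, every $\mathcal L_P$-formula $\varphi(x,\bar a)$ in a single variable $x$ which divides over a subset $B\subseteq\mathbb U$ is algebraic (has only finitely many realizations).
   Context: $\mathcal L$ is the language of abelian groups $(+,-,0)$ with a constant $1$ and unary predicates $x\equiv_k j$ ($0\le j<k$); $\mathcal Z$ is $\mathbb Z$ with the natural interpretation (congruence modulo $k$); $\mathcal L_P=\mathcal L\cup\{P\}$. A formula $\varphi(x,\bar a)$ divides over $B$ if there is a $B$-indiscernible sequence $(\bar a_n)_{n\in\mathbb N}$ with $\bar a_0=\bar a$ such that $\{\varphi(x,\bar a_n)\}_{n\in\mathbb N}$ is inconsistent. A subset $D\subseteq M$ is additively random if for all $r,r'\in\mathbb N$ and all terms $m_1x+z_1,\ldots,m_rx+z_r$ and $m'_1x+z'_1,\ldots,m'_{r'}x+z'_{r'}$ with all $m_i,m'_j\ge1$ integers, there are an $\mathcal L$-formula $\chi(\bar z,\bar z')$ and a finite set $\partial(\chi)\subseteq\mathbb Z$ such that, for all tuples $\bar b,\bar b'$ in $M$ with $(m_i,b_i)\ne(m'_j,b'_j)$ for all $i,j$: (P1) if $\mathcal M\models\chi(\bar b,\bar b')$ then there are infinitely many $a\in M$ with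 $m_ia+b_i\in D$ for all $i$ and $m'_ja+b'_j\notin D$ for all $j$; (P2) if $\mathcal M\not\models\chi(\bar b,\bar b')$, then $r\ge1$ and there is $k\in\partial(\chi)$ such that for every integer $s\in\{0,\ldots,k-1\}$ some $m_is+b_i\equiv_k0$ (as a first-order statement: $\mathcal M\models\forall\bar y\bar y'((\neg\chi(\bar y,\bar y')\wedge\bigwedge_{i,j}y_i\ne y'_j)\to\bigvee_{k\in\partial(\chi)}\bigwedge_{s<k}\bigvee_{i=1}^r m_is+y_i\equiv_k0))$; (P3) for every $k\in\partial(\chi)$, the set of $x\in D$ with $x\equiv_k0$ is a finite subset of $\mathbb Z$. *)

theory Defs
  imports Main
begin

datatype tm = Var nat | Zero | One | Add tm tm | Neg tm

text \<open>Formulas. Cong k j t stands for the atomic formula t \<equiv>_k j;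
  Pr t is the new unary predicate P (only in L_P).\<close>
datatype fm = Eq tm tm | Cong nat nat tm | Pr tm | Bot
  | Not fm | Conj fm fm | Ex nat fm

fun tvars :: "tm \<Rightarrow> nat set" where
  "tvars (Var v) = {v}"
| "tvars Zero = {}"
| "tvars One = {}"
| "tvars (Add s t) = tvars s \<union> tvars t"
| "tvars (Neg t) = tvars t"

fun fv :: "fm \<Rightarrow> nat set" where
  "fv (Eq s t) = tvars s \<union> tvars t"
| "fv (Cong k j t) = tvars t"
| "fv (Pr t) = tvars t"
| "fv Bot = {}"
| "fv (Not p) = fv p"
| "fv (Conj p q) = fv p \<union> fv q"
| "fv (Ex v p) = fv p - {v}"

fun Lfm :: "fm \<Rightarrow> bool" where
  "Lfm (Pr t) = False"
| "Lfm (Not p) = Lfm p"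
| "Lfm (Conj p q) = (Lfm p \<and> Lfm q)"
| "Lfm (Ex v p) = Lfm p"
| "Lfm _ = True"

text \<open>An L_P-structure whose universe is the whole type 'a.
  An L-structure is the same thing with the field s_P ignored.\<close>
record 'a str =
  s_zero :: 'a
  s_one :: 'a
  s_add :: "'a \<Rightarrow> 'a \<Rightarrow> 'a"
  s_neg :: "'a \<Rightarrow> 'a"
  s_cong :: "nat \<Rightarrow> nat \<Rightarrow> 'a \<Rightarrow> bool"
  s_P :: "'a \<Rightarrow> bool"

fun tval :: "'a str \<Rightarrow> (nat \<Rightarrow> 'a) \<Rightarrow> tm \<Rightarrow> 'a" where
  "tval S \<sigma> (Var v) = \<sigma> v"
| "tval S \<sigma> Zero = s_zero S"
| "tval S \<sigma> One = s_one S"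
| "tval S \<sigma> (Add s t) = s_add S (tval S \<sigma> s) (tval S \<sigma> t)"
| "tval S \<sigma> (Neg t) = s_neg S (tval S \<sigma> t)"

fun sat :: "'a str \<Rightarrow> fm \<Rightarrow> (nat \<Rightarrow> 'a) \<Rightarrow> bool" where
  "sat S (Eq s t) \<sigma> = (tval S \<sigma> s = tval S \<sigma> t)"
| "sat S (Cong k j t) \<sigma> = s_cong S k j (tval S \<sigma> t)"
| "sat S (Pr t) \<sigma> = s_P S (tval S \<sigma> t)"
| "sat S Bot \<sigma> = False"
| "sat S (Not p) \<sigma> = (\<not> sat S p \<sigma>)"
| "sat S (Conj p q) \<sigma> = (sat S p \<sigma> \<and> sat S q \<sigma>)"
| "sat S (Ex v p) \<sigma> = (\<exists>a. sat S p (\<sigma>(v := a)))"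

definition Zstr :: "int str" where
  "Zstr = \<lparr> s_zero = 0, s_one = 1, s_add = (+), s_neg = uminus,
            s_cong = (\<lambda>k j x. 0 < k \<and> j < k \<and> x mod int k = int j),
            s_P = (\<lambda>_. False) \<rparr>"

definition elem_ext_of_Z :: "(int \<Rightarrow> 'a) \<Rightarrow> 'a str \<Rightarrow> bool" where
  "elem_ext_of_Z e M \<longleftrightarrow>
     (\<forall>\<phi> \<sigma>. Lfm \<phi> \<longrightarrow> (sat Zstr \<phi> \<sigma> \<longleftrightarrow> sat M \<phi> (e \<circ> \<sigma>)))"

definition expand :: "'a str \<Rightarrow> 'a set \<Rightarrow> 'a str" where
  "expand M D = M\<lparr> s_P := (\<lambda>a. a \<in> D) \<rparr>"

definition elem_equiv :: "'a str \<Rightarrow> 'b str \<Rightarrow> bool" where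
  "elem_equiv S T \<longleftrightarrow>
     (\<forall>\<phi>. fv \<phi> = {} \<longrightarrow> (sat S \<phi> (\<lambda>_. undefined) \<longleftrightarrow> sat T \<phi> (\<lambda>_. undefined)))"

definition smul :: "'a str \<Rightarrow> nat \<Rightarrow> 'a \<Rightarrow> 'a" where
  "smul M n a = ((s_add M a) ^^ n) (s_zero M)"

text \<open>Assignment sending z_1..z_r to variables 0..r-1 and z'_1..z'_r' to r..r+r'-1.\<close>
definition zasg :: "'a list \<Rightarrow> 'a list \<Rightarrow> nat \<Rightarrow> 'a" where
  "zasg bs bs' v = (if v < length bs then bs ! v else bs' ! (v - length bs))"

definition additively_random :: "'a str \<Rightarrow> (int \<Rightarrow> 'a) \<Rightarrow> 'a set \<Rightarrow> bool" where
  "additively_random M e D \<longleftrightarrow>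
    (\<forall>ms ms' :: nat list. (\<forall>m\<in>set ms. 1 \<le> m) \<and> (\<forall>m\<in>set ms'. 1 \<le> m) \<longrightarrow>
      (\<exists>\<chi> (Dl::nat set). Lfm \<chi> \<and> fv \<chi> \<subseteq> {..<length ms + length ms'} \<and>
         finite Dl \<and> (\<forall>k\<in>Dl. 1 \<le> k) \<and>
         (\<forall>bs bs'. length bs = length ms \<and> length bs' = length ms' \<and>
            (\<forall>i<length ms. \<forall>j<length ms'. (ms ! i, bs ! i) \<noteq> (ms' ! j, bs' ! j)) \<longrightarrow>
            (sat M \<chi> (zasg bs bs') \<longrightarrow>
               infinite {a. (\<forall>i<length ms. s_add M (smul M (ms ! i) a) (bs ! i) \<in> D) \<and>
                            (\<forall>j<length ms'. s_add M (smul M (ms' ! j) a) (bs' ! j) \<notin> D)}) \<and>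
            (\<not> sat M \<chi> (zasg bs bs') \<longrightarrow>
               1 \<le> length ms \<and>
               (\<exists>k\<in>Dl. \<forall>s<k. \<exists>i<length ms.
                   s_cong M k 0 (s_add M (smul M (ms ! i * s) (s_one M)) (bs ! i))))) \<and>
         (\<forall>k\<in>Dl. {x \<in> D. s_cong M k 0 x} \<subseteq> range e \<and> finite {x \<in> D. s_cong M k 0 x})))"

text \<open>|A| \<le> |B| + aleph_0.\<close>
definition small_wrt :: "'b set \<Rightarrow> 'b set \<Rightarrow> bool" where
  "small_wrt A B \<longleftrightarrow> (\<exists>f :: 'b \<Rightarrow> 'b + nat. inj_on f A \<and> f ` A \<subseteq> Inl ` B \<union> range Inr)"

text \<open>U is (|B| + aleph_0)^+-saturated: every set of L_P-formulas in the variable 0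
  with parameters from a set A with |A| \<le> |B| + aleph_0 which is finitely
  satisfiable in U is realized in U.\<close>
definition saturated_for :: "'b str \<Rightarrow> 'b set \<Rightarrow> bool" where
  "saturated_for U B \<longleftrightarrow>
    (\<forall>A (\<Sigma> :: (fm \<times> (nat \<Rightarrow> 'b)) set).
       small_wrt A B \<and> (\<forall>(\<phi>,\<sigma>)\<in>\<Sigma>. \<forall>v\<in>fv \<phi> - {0}. \<sigma> v \<in> A) \<and>
       (\<forall>F\<subseteq>\<Sigma>. finite F \<longrightarrow> (\<exists>c. \<forall>(\<phi>,\<sigma>)\<in>F. sat U \<phi> (\<sigma>(0 := c)))) \<longrightarrow>
       (\<exists>c. \<forall>(\<phi>,\<sigma>)\<in>\<Sigma>. sat U \<phi> (\<sigma>(0 := c))))"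

definition seq_asg :: "nat \<Rightarrow> nat \<Rightarrow> (nat \<Rightarrow> nat) \<Rightarrow> (nat \<Rightarrow> 'b list) \<Rightarrow> (nat \<Rightarrow> 'b) \<Rightarrow> nat \<Rightarrow> 'b" where
  "seq_asg l n f s \<beta> v = (if v < n * l then s (f (v div l)) ! (v mod l) else \<beta> v)"

definition indiscernible :: "'b str \<Rightarrow> 'b set \<Rightarrow> nat \<Rightarrow> (nat \<Rightarrow> 'b list) \<Rightarrow> bool" where
  "indiscernible U B l s \<longleftrightarrow> (\<forall>i. length (s i) = l) \<and>
    (\<forall>n \<psi> \<beta> f g. strict_mono_on {..<n} f \<and> strict_mono_on {..<n} g \<and>
        (\<forall>v\<in>fv \<psi>. n * l \<le> v \<longrightarrow> \<beta> v \<in> B) \<longrightarrow>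
        (sat U \<psi> (seq_asg l n f s \<beta>) \<longleftrightarrow> sat U \<psi> (seq_asg l n g s \<beta>)))"

text \<open>Assignment for \<phi>(x, a): x is variable 0, a_1..a_l are variables 1..l.\<close>
definition tup :: "'b list \<Rightarrow> 'b \<Rightarrow> nat \<Rightarrow> 'b" where
  "tup as c v = (if v = 0 then c else if v \<le> length as then as ! (v - 1) else undefined)"

definition divides :: "'b str \<Rightarrow> 'b set \<Rightarrow> fm \<Rightarrow> 'b list \<Rightarrow> bool" where
  "divides U B \<phi> as \<longleftrightarrow>
    (\<exists>s. indiscernible U B (length as) s \<and> s 0 = as \<and>
         \<not> (\<forall>N. finite N \<longrightarrow> (\<exists>c. \<forall>n\<in>N. sat U \<phi> (tup (s n) c))))"

end

theory Submission
  imports Defs "HOL-Library.Countable_Set"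
begin

text \<open>
  Work in the saturated model \<open>U\<close>, writing \<open>P\<close> for its interpretation of the predicate. Two
  valuations are qf-equivalent on a set \<open>V\<close> of variables if every term over \<open>V\<close> has under
  both the same residues, the same vanishing and the same membership in each \<open>m\<cdot>P\<close>
  (\<open>m \<ge> 1\<close>). This is a back-and-forth system, so qf-equivalent valuations satisfy the same
  formulas. To extend it by an element \<open>u\<close>: if a multiple of \<open>u\<close> is named by a term, divide;
  otherwise realise by saturation the type of an independent \<open>v\<close> with the residues of \<open>u\<close>
  and the same memberships \<open>a\<cdot>v + y \<in> m\<cdot>P\<close>. Fixing \<open>v\<close> modulo a common multiple \<open>K\<close> of
  the moduli turns finitely many of these conditions into a \<open>P\<close>-pattern for \<open>(v - r)/K\<close>,
  which additive randomness (P1) realises unless the obstruction (P2) occurs; by (P3) the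
  obstruction would make some \<open>a\<cdot>u + y\<close> standard, contradicting independence. Symmetry of
  \<open>P\<close> takes care of negative coefficients.

  If \<open>\<phi>(x, a)\<close> had infinitely many solutions, saturation would give one, \<open>c\<close>, independent
  over \<open>a\<close>. Along a \<open>B\<close>-indiscernible sequence \<open>(a\<^sub>n)\<close> starting at \<open>a\<close>, every \<open>a\<^sub>n\<close> is
  qf-equivalent to \<open>a\<close> and linear relations among the \<open>a\<^sub>n\<close> already hold at \<open>a\<close>, so one
  \<open>v\<close> extends all these equivalences by \<open>c \<mapsto> v\<close>. Then \<open>v\<close> solves every \<open>\<phi>(x, a\<^sub>n)\<close>,
  and \<open>\<phi>(x, a)\<close> does not divide.
\<close>

instance tm :: countable
  by countable_datatype

lemma finite_tvars [simp]: "finite (tvars t)"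
  by (induction t) auto

lemma finite_fv [simp]: "finite (fv p)"
  by (induction p) auto

lemma tval_cong: "(\<And>v. v \<in> tvars t \<Longrightarrow> \<sigma> v = \<sigma>' v) \<Longrightarrow> tval S \<sigma> t = tval S \<sigma>' t"
  by (induction t) auto

lemma sat_cong: "(\<And>v. v \<in> fv p \<Longrightarrow> \<sigma> v = \<sigma>' v) \<Longrightarrow> sat S p \<sigma> = sat S p \<sigma>'"
proof (induction p arbitrary: \<sigma> \<sigma>')
  case (Eq s t)
  then show ?case using tval_cong[of s \<sigma> \<sigma>' S] tval_cong[of t \<sigma> \<sigma>' S] by simp
next
  case (Cong k j t)
  then show ?case using tval_cong[of t \<sigma> \<sigma>' S] by simp
next
  case (Pr t)
  then show ?case using tval_cong[of t \<sigma> \<sigma>' S] by simp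
next
  case (Ex v p)
  have "sat S p (\<sigma>(v := a)) = sat S p (\<sigma>'(v := a))" for a
    by (rule Ex.IH) (use Ex.prems in auto)
  then show ?case by simp
next
  case (Not p)
  then show ?case by (metis fv.simps(5) sat.simps(5))
next
  case (Conj p q)
  then show ?case by (metis UnI1 UnI2 fv.simps(6) sat.simps(6))
qed simp

lemma tval_upd_notin [simp]: "v \<notin> tvars t \<Longrightarrow> tval S (\<sigma>(v := a)) t = tval S \<sigma> t"
  by (rule tval_cong) auto

abbreviation "FImp p q \<equiv> Not (Conj p (Not q))"
abbreviation "FOr p q \<equiv> Not (Conj (Not p) (Not q))"
abbreviation "FAll v p \<equiv> Not (Ex v (Not p))"
abbreviation "FIff p q \<equiv> Conj (FImp p q) (FImp q p)"
abbreviation "Top \<equiv> Not Bot"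

definition bigAnd :: "fm list \<Rightarrow> fm" where
  "bigAnd ps = foldr Conj ps Top"

definition bigOr :: "fm list \<Rightarrow> fm" where
  "bigOr ps = foldr FOr ps Bot"

lemma sat_bigAnd [simp]: "sat S (bigAnd ps) \<sigma> \<longleftrightarrow> (\<forall>p\<in>set ps. sat S p \<sigma>)"
  by (induction ps) (auto simp: bigAnd_def)

lemma sat_bigOr [simp]: "sat S (bigOr ps) \<sigma> \<longleftrightarrow> (\<exists>p\<in>set ps. sat S p \<sigma>)"
  by (induction ps) (auto simp: bigOr_def)

lemma Lfm_bigOr [simp]: "Lfm (bigOr ps) \<longleftrightarrow> (\<forall>p\<in>set ps. Lfm p)"
  by (induction ps) (auto simp: bigOr_def)

definition univ_closure :: "fm \<Rightarrow> fm" where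
  "univ_closure p = foldr FAll (sorted_list_of_set (fv p)) p"

lemma sat_foldr_FAll:
  "sat S (foldr FAll vs p) \<sigma> \<longleftrightarrow> (\<forall>\<tau>. (\<forall>v. v \<notin> set vs \<longrightarrow> \<tau> v = \<sigma> v) \<longrightarrow> sat S p \<tau>)"
proof (induction vs arbitrary: \<sigma>)
  case Nil
  then show ?case by (auto simp: fun_eq_iff[symmetric])
next
  case (Cons v vs)
  have "sat S (foldr FAll (v # vs) p) \<sigma> \<longleftrightarrow> (\<forall>a. sat S (foldr FAll vs p) (\<sigma>(v := a)))"
    by simp
  also have "\<dots> \<longleftrightarrow> (\<forall>a \<tau>. (\<forall>w. w \<notin> set vs \<longrightarrow> \<tau> w = (\<sigma>(v := a)) w) \<longrightarrow> sat S p \<tau>)"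
    using Cons.IH by blast
  also have "\<dots> \<longleftrightarrow> (\<forall>\<tau>. (\<forall>w. w \<notin> set (v # vs) \<longrightarrow> \<tau> w = \<sigma> w) \<longrightarrow> sat S p \<tau>)"
  proof (intro iffI allI impI)
    fix \<tau> assume "\<forall>a \<tau>. (\<forall>w. w \<notin> set vs \<longrightarrow> \<tau> w = (\<sigma>(v := a)) w) \<longrightarrow> sat S p \<tau>"
      and "\<forall>w. w \<notin> set (v # vs) \<longrightarrow> \<tau> w = \<sigma> w"
    then show "sat S p \<tau>" by (metis fun_upd_apply set_ConsD)
  qed auto
  finally show ?case .
qed

lemma fv_foldr_FAll [simp]: "fv (foldr FAll vs p) = fv p - set vs"
  by (induction vs) auto

lemma Lfm_foldr_FAll [simp]: "Lfm (foldr FAll vs p) = Lfm p"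
  by (induction vs) auto

lemma fv_univ_closure [simp]: "fv (univ_closure p) = {}"
  by (simp add: univ_closure_def)

lemma Lfm_univ_closure [simp]: "Lfm (univ_closure p) = Lfm p"
  by (simp add: univ_closure_def)

lemma sat_univ_closure: "sat S (univ_closure p) \<sigma> \<longleftrightarrow> (\<forall>\<tau>. sat S p \<tau>)"
proof -
  have "sat S p \<tau>" if "\<forall>\<tau>. (\<forall>v. v \<notin> fv p \<longrightarrow> \<tau> v = \<sigma> v) \<longrightarrow> sat S p \<tau>" for \<tau>
    using that[rule_format, of "\<lambda>v. if v \<in> fv p then \<tau> v else \<sigma> v"] sat_cong[of p]
    by (smt (verit))
  then show ?thesis by (auto simp: univ_closure_def sat_foldr_FAll)
qed

lemma expand_simps [simp]:
  "s_zero (expand M D) = s_zero M" "s_one (expand M D) = s_one M"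
  "s_add (expand M D) = s_add M" "s_neg (expand M D) = s_neg M"
  "s_cong (expand M D) = s_cong M" "s_P (expand M D) = (\<lambda>a. a \<in> D)"
  by (auto simp: expand_def)

lemma tval_expand [simp]: "tval (expand M D) \<sigma> t = tval M \<sigma> t"
  by (induction t) auto

lemma sat_expand_Lfm: "Lfm p \<Longrightarrow> sat (expand M D) p \<sigma> = sat M p \<sigma>"
  by (induction p arbitrary: \<sigma>) auto

lemma smul_expand [simp]: "smul (expand M D) = smul M"
  by (simp add: smul_def fun_eq_iff)

lemma Zstr_simps [simp]:
  "s_zero Zstr = 0" "s_one Zstr = 1" "s_add Zstr = (+)" "s_neg Zstr = uminus"
  "s_cong Zstr k j x \<longleftrightarrow> 0 < k \<and> j < k \<and> x mod int k = int j"
  by (auto simp: Zstr_def)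

fun mulT :: "nat \<Rightarrow> tm \<Rightarrow> tm" where
  "mulT 0 t = Zero"
| "mulT (Suc n) t = Add t (mulT n t)"

definition zmulT :: "int \<Rightarrow> tm \<Rightarrow> tm" where
  "zmulT i t = (if 0 \<le> i then mulT (nat i) t else Neg (mulT (nat (- i)) t))"

definition numT :: "int \<Rightarrow> tm" where
  "numT i = zmulT i One"

lemma tvars_mulT [simp]: "tvars (mulT n t) = (if n = 0 then {} else tvars t)"
  by (induction n) auto

lemma tvars_zmulT [simp]: "tvars (zmulT i t) = (if i = 0 then {} else tvars t)"
  by (auto simp: zmulT_def)

lemma tvars_numT [simp]: "tvars (numT i) = {}"
  by (simp add: numT_def)

lemma tval_Zstr_mulT [simp]: "tval Zstr \<sigma> (mulT n t) = int n * tval Zstr \<sigma> t"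
  by (induction n) (auto simp: algebra_simps)

lemma tval_Zstr_zmulT [simp]: "tval Zstr \<sigma> (zmulT i t) = i * tval Zstr \<sigma> t"
  by (auto simp: zmulT_def)

lemma tval_Zstr_numT [simp]: "tval Zstr \<sigma> (numT i) = i"
  by (simp add: numT_def)

lemma tval_mulT_smul: "tval M \<sigma> (mulT m t) = smul M m (tval M \<sigma> t)"
  by (induction m) (auto simp: smul_def)

fun mapvars :: "(nat \<Rightarrow> nat) \<Rightarrow> tm \<Rightarrow> tm" where
  "mapvars g (Var v) = Var (g v)"
| "mapvars g Zero = Zero"
| "mapvars g One = One"
| "mapvars g (Add s t) = Add (mapvars g s) (mapvars g t)"
| "mapvars g (Neg t) = Neg (mapvars g t)"

lemma tval_mapvars: "tval S \<sigma> (mapvars g t) = tval S (\<sigma> \<circ> g) t"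
  by (induction t) auto

lemma tvars_mapvars [simp]: "tvars (mapvars g t) = g ` tvars t"
  by (induction t) auto

lemma tvars_mapvars_pred: "tvars t \<subseteq> {1..l} \<Longrightarrow> tvars (mapvars (\<lambda>v. v - 1) t) \<subseteq> {..<l}"
  by (fastforce simp: subset_iff)

fun coeff :: "nat \<Rightarrow> tm \<Rightarrow> int" where
  "coeff x (Var v) = (if v = x then 1 else 0)"
| "coeff x Zero = 0"
| "coeff x One = 0"
| "coeff x (Add s t) = coeff x s + coeff x t"
| "coeff x (Neg t) = - coeff x t"

fun rest :: "nat \<Rightarrow> tm \<Rightarrow> tm" where
  "rest x (Var v) = (if v = x then Zero else Var v)"
| "rest x Zero = Zero"
| "rest x One = One"
| "rest x (Add s t) = Add (rest x s) (rest x t)"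
| "rest x (Neg t) = Neg (rest x t)"

lemma tvars_rest [simp]: "tvars (rest x t) = tvars t - {x}"
  by (induction t) auto

lemma tval_Zstr_coeff_rest: "tval Zstr \<sigma> t = coeff x t * \<sigma> x + tval Zstr \<sigma> (rest x t)"
  by (induction t) (auto simp: algebra_simps)

lemma finite_subset_image_Un3:
  assumes "finite F" "F \<subseteq> f ` A \<union> g ` B \<union> h ` C"
  obtains A' B' C' where "A' \<subseteq> A" "finite A'" "B' \<subseteq> B" "finite B'" "C' \<subseteq> C" "finite C'"
    "F \<subseteq> f ` A' \<union> g ` B' \<union> h ` C'"
proof -
  obtain A' where "A' \<subseteq> A" "finite A'" and A': "F \<inter> f ` A = f ` A'"
    using finite_subset_image[of "F \<inter> f ` A" f A] assms(1) by blast
  obtain B' where "B' \<subseteq> B" "finite B'" and B': "F \<inter> g ` B = g ` B'"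
    using finite_subset_image[of "F \<inter> g ` B" g B] assms(1) by blast
  obtain C' where "C' \<subseteq> C" "finite C'" and C': "F \<inter> h ` C = h ` C'"
    using finite_subset_image[of "F \<inter> h ` C" h C] assms(1) by blast
  have "F = (F \<inter> f ` A) \<union> (F \<inter> g ` B) \<union> (F \<inter> h ` C)"
    using assms(2) by blast
  then have "F \<subseteq> f ` A' \<union> g ` B' \<union> h ` C'"
    unfolding A' B' C' by simp
  with \<open>A' \<subseteq> A\<close> \<open>finite A'\<close> \<open>B' \<subseteq> B\<close> \<open>finite B'\<close> \<open>C' \<subseteq> C\<close> \<open>finite C'\<close> show ?thesis
    by (rule that)
qed

section \<open>Models of the theory of \<open>(M, D)\<close>\<close>

locale Z_model =
  fixes M :: "'a str" and e :: "int \<Rightarrow> 'a" and D :: "'a set" and U :: "'b str"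
  assumes ext: "elem_ext_of_Z e M"
    and model: "elem_equiv (expand M D) U"
begin

lemma transfer_from_M:
  assumes "\<And>\<sigma>. sat (expand M D) p \<sigma>"
  shows "sat U p \<tau>"
proof -
  have "sat (expand M D) (univ_closure p) (\<lambda>_. undefined)"
    using assms by (simp add: sat_univ_closure)
  then have "sat U (univ_closure p) (\<lambda>_. undefined)"
    using model by (simp add: elem_equiv_def)
  then show ?thesis by (simp add: sat_univ_closure)
qed

lemma sat_M_iff_Z: "Lfm p \<Longrightarrow> sat M p (e \<circ> \<sigma>) \<longleftrightarrow> sat Zstr p \<sigma>"
  using ext unfolding elem_ext_of_Z_def by blast

lemma transfer_from_Z:
  assumes "Lfm p" "\<And>\<sigma>. sat Zstr p \<sigma>"
  shows "sat U p \<tau>"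
proof (rule transfer_from_M)
  have "sat Zstr (univ_closure p) (\<lambda>_. 0)"
    using assms(2) by (simp add: sat_univ_closure)
  then have "sat M (univ_closure p) (e \<circ> (\<lambda>_. 0))"
    by (subst sat_M_iff_Z) (simp_all add: assms(1))
  then show "sat (expand M D) p \<sigma>" for \<sigma>
    using assms(1) by (simp add: sat_univ_closure sat_expand_Lfm)
qed

lemma transfer_identity: "(\<And>\<sigma>. tval Zstr \<sigma> s = tval Zstr \<sigma> t) \<Longrightarrow> tval U \<tau> s = tval U \<tau> t"
  using transfer_from_Z[of "Eq s t" \<tau>] by simp

lemma inj_e: "inj e"
proof (rule injI)
  fix a b assume "e a = e b"
  then show "a = b"
    using sat_M_iff_Z[of "Eq (Var 0) (Var 1)" "(!) [a, b]"] by simp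
qed

lemma tval_M_numT: "tval M \<sigma> (numT n) = e n"
proof -
  have "e n = tval M (e \<circ> (\<lambda>_. n)) (numT n)"
    using sat_M_iff_Z[of "Eq (Var 0) (numT n)" "\<lambda>_. n"] by simp
  also have "\<dots> = tval M \<sigma> (numT n)" by (rule tval_cong) simp
  finally show ?thesis by simp
qed

abbreviation add_U :: "'b \<Rightarrow> 'b \<Rightarrow> 'b"  (infixl \<open>\<oplus>\<close> 65)
  where "x \<oplus> y \<equiv> s_add U x y"
abbreviation neg_U :: "'b \<Rightarrow> 'b"  (\<open>\<ominus>_\<close> [81] 80)
  where "\<ominus>x \<equiv> s_neg U x"
abbreviation zero_U :: 'b  (\<open>\<zero>\<close>)
  where "\<zero> \<equiv> s_zero U"
abbreviation one_U :: 'b  (\<open>\<one>\<close>)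
  where "\<one> \<equiv> s_one U"
abbreviation cong_U :: "nat \<Rightarrow> nat \<Rightarrow> 'b \<Rightarrow> bool"
  where "cong_U k j x \<equiv> s_cong U k j x"
abbreviation in_P :: "'b \<Rightarrow> bool"
  where "in_P x \<equiv> s_P U x"

sublocale U_add: comm_monoid "(\<oplus>)" \<zero>
proof
  fix x y z
  show "x \<oplus> y \<oplus> z = x \<oplus> (y \<oplus> z)"
    using transfer_identity[of "Add (Add (Var 0) (Var 1)) (Var 2)" "Add (Var 0) (Add (Var 1) (Var 2))"
        "(!) [x, y, z]"] by simp
  show "x \<oplus> y = y \<oplus> x"
    using transfer_identity[of "Add (Var 0) (Var 1)" "Add (Var 1) (Var 0)" "(!) [x, y]"] by simp
  show "x \<oplus> \<zero> = x"
    using transfer_identity[of "Add (Var 0) Zero" "Var 0" "(!) [x]"] by simp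
qed

sublocale U_group: group "(\<oplus>)" \<zero> "\<lambda>x. \<ominus>x"
proof
  show "\<ominus>x \<oplus> x = \<zero>" for x
    using transfer_identity[of "Add (Neg (Var 0)) (Var 0)" Zero "(!) [x]"] by simp
qed (simp_all add: U_add.assoc)

lemma neg_U_add: "\<ominus>(x \<oplus> y) = \<ominus>x \<oplus> \<ominus>y"
  by (simp add: U_group.inverse_distrib_swap U_add.commute)

lemma neg_U_inject [simp]: "\<ominus>x = \<ominus>y \<longleftrightarrow> x = y"
  by (metis U_group.inverse_inverse)

lemma add_U_eq_0_iff: "x \<oplus> y = \<zero> \<longleftrightarrow> x = \<ominus>y"
  by (metis U_group.inverse_unique U_group.inverse_inverse U_add.commute U_group.right_inverse)

lemma add_U_neg_eq_0_iff [simp]: "x \<oplus> \<ominus>y = \<zero> \<longleftrightarrow> x = y"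
  by (simp add: add_U_eq_0_iff)

lemma add_U_eq_iff: "x \<oplus> y = z \<longleftrightarrow> x = z \<oplus> \<ominus>y"
  by (metis U_add.assoc U_add.comm_neutral U_group.left_inverse U_add.commute)

definition nmul :: "nat \<Rightarrow> 'b \<Rightarrow> 'b"  (infixr \<open>\<cdot>\<close> 70)
  where "m \<cdot> x = ((\<oplus>) x ^^ m) \<zero>"

definition zmul :: "int \<Rightarrow> 'b \<Rightarrow> 'b"
  where "zmul i x = (if 0 \<le> i then nat i \<cdot> x else \<ominus>(nat (- i) \<cdot> x))"

definition num :: "int \<Rightarrow> 'b"
  where "num i = zmul i \<one>"

lemma nmul_0 [simp]: "0 \<cdot> x = \<zero>"
  by (simp add: nmul_def)

lemma nmul_Suc: "Suc m \<cdot> x = x \<oplus> m \<cdot> x"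
  by (simp add: nmul_def)

lemma nmul_1 [simp]: "1 \<cdot> x = x"
  by (simp add: nmul_def)

lemma nmul_zero [simp]: "m \<cdot> \<zero> = \<zero>"
  by (induction m) (simp_all add: nmul_Suc)

lemma tval_U_mulT [simp]: "tval U \<sigma> (mulT m t) = m \<cdot> tval U \<sigma> t"
  by (induction m) (auto simp: nmul_Suc)

lemma tval_U_zmulT [simp]: "tval U \<sigma> (zmulT i t) = zmul i (tval U \<sigma> t)"
  by (auto simp: zmulT_def zmul_def)

lemma tval_U_numT [simp]: "tval U \<sigma> (numT i) = num i"
  by (simp add: numT_def num_def)

lemma zmul_of_nat [simp]: "zmul (int m) x = m \<cdot> x"
  by (simp add: zmul_def)

lemma zmul_0 [simp]: "zmul 0 x = \<zero>"
  by (simp add: zmul_def)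

lemma num_of_nat: "num (int n) = n \<cdot> \<one>"
  by (simp add: num_def)

lemma num_0 [simp]: "num 0 = \<zero>"
  by (simp add: num_def zmul_def)

lemma nmul_mult: "(m * n) \<cdot> x = m \<cdot> n \<cdot> x"
  using transfer_identity[of "mulT (m * n) (Var 0)" "mulT m (mulT n (Var 0))" "(!) [x]"] by simp

lemma nmul_add_distrib: "m \<cdot> (x \<oplus> y) = m \<cdot> x \<oplus> m \<cdot> y"
  using transfer_identity[of "mulT m (Add (Var 0) (Var 1))" "Add (mulT m (Var 0)) (mulT m (Var 1))"
      "(!) [x, y]"]
  by (simp add: algebra_simps)

lemma nmul_neg: "m \<cdot> \<ominus>x = \<ominus>(m \<cdot> x)"
  using transfer_identity[of "mulT m (Neg (Var 0))" "Neg (mulT m (Var 0))" "(!) [x]"] by simp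

lemma nmul_zmul: "m \<cdot> zmul i x = zmul (int m * i) x"
  using transfer_identity[of "mulT m (zmulT i (Var 0))" "zmulT (int m * i) (Var 0)" "(!) [x]"] by simp

lemma zmul_mult: "zmul (i * j) x = zmul i (zmul j x)"
  using transfer_identity[of "zmulT (i * j) (Var 0)" "zmulT i (zmulT j (Var 0))" "(!) [x]"] by simp

lemma nmul_num: "m \<cdot> num i = num (int m * i)"
  by (simp add: num_def nmul_zmul)

lemma nmul_cancel [simp]: "1 \<le> m \<Longrightarrow> m \<cdot> x = m \<cdot> y \<longleftrightarrow> x = y"
  using transfer_from_Z[of "FImp (Eq (mulT m (Var 0)) (mulT m (Var 1))) (Eq (Var 0) (Var 1))"
      "(!) [x, y]"]
  by auto

lemma inj_nmul: "1 \<le> m \<Longrightarrow> inj (nmul m)"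
  by (rule injI) simp

lemma inj_affine: "1 \<le> m \<Longrightarrow> inj (\<lambda>x. m \<cdot> x \<oplus> c)"
  by (rule injI) (metis U_add.commute U_group.left_cancel nmul_cancel)

lemma tval_U_coeff_rest: "tval U \<rho> t = zmul (coeff x t) (\<rho> x) \<oplus> tval U \<rho> (rest x t)"
  using transfer_identity[of t "Add (zmulT (coeff x t) (Var x)) (rest x t)" \<rho>]
  by (simp add: tval_Zstr_coeff_rest[of _ t x])

lemma cong_U_range:
  assumes "cong_U k j x"
  shows "0 < k \<and> j < k"
proof (rule ccontr)
  assume "\<not> (0 < k \<and> j < k)"
  then have "sat U (Not (Cong k j (Var 0))) ((!) [x])"
    by (intro transfer_from_Z) auto
  then show False using assms by simp
qed

lemma cong_U_exists:
  assumes "0 < k"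
  obtains j where "j < k" "cong_U k j x"
proof -
  have "sat U (bigOr (map (\<lambda>j. Cong k j (Var 0)) [0..<k])) ((!) [x])"
  proof (rule transfer_from_Z)
    fix \<sigma> :: "nat \<Rightarrow> int"
    have "\<sigma> 0 mod int k = int (nat (\<sigma> 0 mod int k))" "nat (\<sigma> 0 mod int k) < k"
      using assms by (simp_all add: nat_less_iff)
    then show "sat Zstr (bigOr (map (\<lambda>j. Cong k j (Var 0)) [0..<k])) \<sigma>"
      using assms by (auto intro!: bexI[of _ "nat (\<sigma> 0 mod int k)"])
  qed simp
  then show ?thesis using that by auto
qed

lemma cong_U_unique: "cong_U k j x \<Longrightarrow> cong_U k j' x \<Longrightarrow> j = j'"
  using transfer_from_Z[of "Not (Conj (Cong k j (Var 0)) (Cong k j' (Var 0)))" "(!) [x]"]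
  by (cases "j = j'") auto

lemma cong_U_iff:
  assumes "0 < k" "j < k"
  shows "cong_U k j x \<longleftrightarrow> (\<exists>w. x = k \<cdot> w \<oplus> num (int j))"
proof -
  have "sat U (FIff (Cong k j (Var 0)) (Ex 1 (Eq (Var 0) (Add (mulT k (Var 1)) (numT (int j))))))
      ((!) [x])"
  proof (rule transfer_from_Z)
    fix \<sigma> :: "nat \<Rightarrow> int"
    have "\<sigma> 0 mod int k = int j \<longleftrightarrow> (\<exists>a. \<sigma> 0 = int k * a + int j)"
    proof
      assume "\<sigma> 0 mod int k = int j"
      then have "\<sigma> 0 = int k * (\<sigma> 0 div int k) + int j"
        using mult_div_mod_eq[of "int k" "\<sigma> 0"] by simp
      then show "\<exists>a. \<sigma> 0 = int k * a + int j" by blast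
    next
      assume "\<exists>a. \<sigma> 0 = int k * a + int j"
      then show "\<sigma> 0 mod int k = int j" using assms by auto
    qed
    then show "sat Zstr (FIff (Cong k j (Var 0))
        (Ex 1 (Eq (Var 0) (Add (mulT k (Var 1)) (numT (int j)))))) \<sigma>"
      using assms by auto
  qed simp
  then show ?thesis by auto
qed

lemma cong_U_0_iff: "0 < k \<Longrightarrow> cong_U k 0 x \<longleftrightarrow> (\<exists>w. x = k \<cdot> w)"
  using cong_U_iff[of k 0 x] by simp

lemma cong_U_num: "j < k \<Longrightarrow> cong_U k j (num (int j))"
  by (subst cong_U_iff) (auto intro: exI[of _ \<zero>])

lemma cong_U_linear:
  assumes "cong_U k r x" "cong_U k r' y"
  shows "cong_U k j (zmul a x \<oplus> y) \<longleftrightarrow> cong_U k j (num (a * int r + int r'))"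
proof -
  have "sat U (FImp (Conj (Cong k r (Var 0)) (Cong k r' (Var 1)))
      (FIff (Cong k j (Add (zmulT a (Var 0)) (Var 1))) (Cong k j (numT (a * int r + int r')))))
      ((!) [x, y])"
  proof (rule transfer_from_Z)
    fix \<sigma> :: "nat \<Rightarrow> int"
    have "(a * \<sigma> 0 + \<sigma> 1) mod int k = (a * int r + int r') mod int k"
      if "\<sigma> 0 mod int k = int r" "\<sigma> 1 mod int k = int r'"
      using that by (metis mod_add_left_eq mod_add_right_eq mod_mult_right_eq)
    then show "sat Zstr (FImp (Conj (Cong k r (Var 0)) (Cong k r' (Var 1)))
        (FIff (Cong k j (Add (zmulT a (Var 0)) (Var 1))) (Cong k j (numT (a * int r + int r'))))) \<sigma>"
      by auto
  qed simp
  then show ?thesis using assms by auto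
qed

lemma cong_U_add_zmul:
  assumes "\<And>j. cong_U k j x \<longleftrightarrow> cong_U k j x'" "\<And>j. cong_U k j y \<longleftrightarrow> cong_U k j y'"
  shows "cong_U k j (zmul a x \<oplus> y) \<longleftrightarrow> cong_U k j (zmul a x' \<oplus> y')"
proof (cases "0 < k")
  case True
  obtain r r' where x: "cong_U k r x" and y: "cong_U k r' y"
    using cong_U_exists[OF True] by metis
  moreover have "cong_U k r x'" "cong_U k r' y'"
    using x y assms by simp_all
  ultimately show ?thesis using cong_U_linear by simp
qed (use cong_U_range in blast)

lemma cong_U_nmul_iff:
  assumes "1 \<le> m"
  shows "cong_U k j x \<longleftrightarrow> cong_U (m * k) (m * j) (m \<cdot> x)"
proof -
  have "sat U (FIff (Cong k j (Var 0)) (Cong (m * k) (m * j) (mulT m (Var 0)))) ((!) [x])"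
  proof (rule transfer_from_Z)
    fix \<sigma> :: "nat \<Rightarrow> int"
    have "(int m * \<sigma> 0) mod (int m * int k) = int m * (\<sigma> 0 mod int k)"
      by (rule mod_mult_mult1)
    then show "sat Zstr (FIff (Cong k j (Var 0)) (Cong (m * k) (m * j) (mulT m (Var 0)))) \<sigma>"
      using assms by auto
  qed simp
  then show ?thesis by auto
qed

lemma cong_U_num_add_iff:
  assumes "\<And>j. cong_U k j y \<longleftrightarrow> cong_U k j y'"
  shows "cong_U k j (num n \<oplus> y) \<longleftrightarrow> cong_U k j (num n \<oplus> y')"
  using cong_U_add_zmul[of k \<one> \<one> y y' j n] assms by (simp add: num_def)

lemma cong_U_nmul_cancel:
  assumes "1 \<le> m" "\<And>k j. cong_U k j (m \<cdot> x) \<longleftrightarrow> cong_U k j (m \<cdot> y)"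
  shows "cong_U k j x \<longleftrightarrow> cong_U k j y"
  using cong_U_nmul_iff[OF assms(1), of k j x] cong_U_nmul_iff[OF assms(1), of k j y]
    assms(2)[of "m * k" "m * j"] by simp

lemma cong_U_mod_dvd:
  assumes "k dvd K" "cong_U K r x"
  shows "cong_U k (r mod k) x"
proof -
  have "0 < k" using assms(1) cong_U_range[OF assms(2)] by (auto intro: Nat.gr0I)
  have "sat U (FImp (Cong K r (Var 0)) (Cong k (r mod k) (Var 0))) ((!) [x])"
  proof (rule transfer_from_Z)
    fix \<sigma> :: "nat \<Rightarrow> int"
    have "\<sigma> 0 mod int K = int r \<Longrightarrow> \<sigma> 0 mod int k = int (r mod k)"
      using assms(1) by (metis mod_mod_cancel of_nat_dvd_iff zmod_int)
    then show "sat Zstr (FImp (Cong K r (Var 0)) (Cong k (r mod k) (Var 0))) \<sigma>"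
      using \<open>0 < k\<close> by auto
  qed simp
  then show ?thesis using assms by simp
qed

lemma residues_eq_if_dvd:
  assumes "k dvd K" "cong_U K r x" "cong_U K r y"
  shows "cong_U k j x \<longleftrightarrow> cong_U k j y"
  using cong_U_mod_dvd[OF assms(1,2)] cong_U_mod_dvd[OF assms(1,3)] cong_U_unique by metis

lemma cong_U_0_add_multiple:
  assumes "0 < m" "m dvd K"
  shows "cong_U m 0 ((a * K) \<cdot> x \<oplus> y) \<longleftrightarrow> cong_U m 0 y"
proof -
  have "sat U (FIff (Cong m 0 (Add (mulT (a * K) (Var 0)) (Var 1))) (Cong m 0 (Var 1))) ((!) [x, y])"
  proof (rule transfer_from_Z)
    fix \<sigma> :: "nat \<Rightarrow> int"
    have "int m dvd int (a * K)" using assms(2) by simp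
    then have "(int (a * K) * \<sigma> 0 + \<sigma> 1) mod int m = \<sigma> 1 mod int m"
      by (metis dvd_mult2 mod_mult_self4 mult.commute dvd_def)
    then show "sat Zstr (FIff (Cong m 0 (Add (mulT (a * K) (Var 0)) (Var 1))) (Cong m 0 (Var 1))) \<sigma>"
      using assms by simp
  qed simp
  then show ?thesis by auto
qed

lemma affine_eq_nmul:
  assumes "q * m = a * K" "m \<cdot> b = num (int (a * r)) \<oplus> y"
  shows "a \<cdot> (K \<cdot> x \<oplus> num (int r)) \<oplus> y = m \<cdot> (q \<cdot> x \<oplus> b)"
proof -
  have "a \<cdot> (K \<cdot> x \<oplus> num (int r)) \<oplus> y = (q * m) \<cdot> x \<oplus> (num (int (a * r)) \<oplus> y)"
    using assms(1) by (simp add: nmul_add_distrib nmul_mult nmul_num U_add.assoc)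
  also have "\<dots> = m \<cdot> (q \<cdot> x \<oplus> b)"
    using assms(2) by (simp add: nmul_add_distrib nmul_mult mult.commute[of q m])
  finally show ?thesis .
qed

lemma cong_U_0_affine_iff:
  assumes "0 < m" "m dvd K"
  shows "cong_U m 0 (a \<cdot> (K \<cdot> x \<oplus> num (int r)) \<oplus> y) \<longleftrightarrow> cong_U m 0 (num (int (a * r)) \<oplus> y)"
proof -
  have "a \<cdot> (K \<cdot> x \<oplus> num (int r)) \<oplus> y = (a * K) \<cdot> x \<oplus> (num (int (a * r)) \<oplus> y)"
    by (simp add: nmul_add_distrib nmul_mult nmul_num U_add.assoc)
  then show ?thesis using cong_U_0_add_multiple[OF assms] by simp
qed

lemma root_eq_iff:
  assumes "1 \<le> m1" "1 \<le> m2" "a1 * m2 = a2 * m1"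
    and "m1 \<cdot> b1 = num (int (a1 * r)) \<oplus> y1" "m2 \<cdot> b2 = num (int (a2 * r)) \<oplus> y2"
  shows "b1 = b2 \<longleftrightarrow> m2 \<cdot> y1 = m1 \<cdot> y2"
proof -
  have "(m1 * m2) \<cdot> b1 = num (int (m2 * (a1 * r))) \<oplus> m2 \<cdot> y1"
    using assms(4) by (metis mult.commute nmul_mult nmul_add_distrib nmul_num of_nat_mult)
  moreover have "(m1 * m2) \<cdot> b2 = num (int (m1 * (a2 * r))) \<oplus> m1 \<cdot> y2"
    using assms(5) by (metis nmul_mult nmul_add_distrib nmul_num of_nat_mult)
  moreover have "m2 * (a1 * r) = m1 * (a2 * r)"
    using assms(3) by (metis mult.assoc mult.commute)
  ultimately have "(m1 * m2) \<cdot> b1 = (m1 * m2) \<cdot> b2 \<longleftrightarrow> m2 \<cdot> y1 = m1 \<cdot> y2"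
    by (simp add: U_group.left_cancel)
  moreover have "1 \<le> m1 * m2" using assms(1,2) by simp
  ultimately show ?thesis by simp
qed

end

section \<open>Additive randomness in the model\<close>

lemma ball_atLeast0LessThan [simp]: "(\<forall>x\<in>{0..<n::nat}. P x) \<longleftrightarrow> (\<forall>x<n. P x)"
  by auto

lemma bex_atLeast0LessThan [simp]: "(\<exists>x\<in>{0..<n::nat}. P x) \<longleftrightarrow> (\<exists>x<n. P x)"
  by auto

definition distinct_fm :: "nat list \<Rightarrow> nat list \<Rightarrow> fm" where
  "distinct_fm ms ms' = bigAnd (map (\<lambda>(i, j). if ms ! i = ms' ! j
      then Not (Eq (Var i) (Var (length ms + j))) else Top)
    (List.product [0..<length ms] [0..<length ms']))"

definition pattern_fm :: "nat list \<Rightarrow> nat list \<Rightarrow> nat \<Rightarrow> fm" where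
  "pattern_fm ms ms' x = Conj
     (bigAnd (map (\<lambda>i. Pr (Add (mulT (ms ! i) (Var x)) (Var i))) [0..<length ms]))
     (bigAnd (map (\<lambda>j. Not (Pr (Add (mulT (ms' ! j) (Var x)) (Var (length ms + j)))))
       [0..<length ms']))"

definition avoid_fm :: "nat \<Rightarrow> nat \<Rightarrow> nat \<Rightarrow> fm" where
  "avoid_fm x b n = bigAnd (map (\<lambda>t. Not (Eq (Var x) (Var (b + t)))) [0..<n])"

definition obstruction_fm :: "nat list \<Rightarrow> nat set \<Rightarrow> fm" where
  "obstruction_fm ms Dl = bigOr (map (\<lambda>k. bigAnd (map (\<lambda>s.
     bigOr (map (\<lambda>i. Cong k 0 (Add (mulT (ms ! i * s) One) (Var i))) [0..<length ms])) [0..<k]))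
     (sorted_list_of_set Dl))"

text \<open>A first-order approximation of (P1)/(P2) that holds in \<open>(M, D)\<close> and therefore in \<open>U\<close>: the
  pattern parameters occupy the variables below \<open>r = length ms + length ms'\<close> (as in
  \<open>zasg\<close>), the next \<open>n\<close> variables hold elements the witness must avoid, and the witness
  is variable \<open>r + n\<close>.\<close>

definition random_fm :: "nat list \<Rightarrow> nat list \<Rightarrow> nat \<Rightarrow> nat set \<Rightarrow> fm" where
  "random_fm ms ms' n Dl =
    (let r = length ms + length ms' in FImp (distinct_fm ms ms')
       (FOr (Ex (r + n) (Conj (pattern_fm ms ms' (r + n)) (avoid_fm (r + n) r n)))
            (obstruction_fm ms Dl)))"

lemma sat_distinct_fm: "sat S (distinct_fm ms ms') \<sigma> \<longleftrightarrow>
   (\<forall>i<length ms. \<forall>j<length ms'. ms ! i = ms' ! j \<longrightarrow> \<sigma> i \<noteq> \<sigma> (length ms + j))"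
  by (auto simp: distinct_fm_def split: if_splits)

lemma sat_pattern_fm: "sat S (pattern_fm ms ms' x) \<sigma> \<longleftrightarrow>
   (\<forall>i<length ms. s_P S (s_add S (tval S \<sigma> (mulT (ms ! i) (Var x))) (\<sigma> i))) \<and>
   (\<forall>j<length ms'. \<not> s_P S (s_add S (tval S \<sigma> (mulT (ms' ! j) (Var x))) (\<sigma> (length ms + j))))"
  by (auto simp: pattern_fm_def)

lemma sat_avoid_fm: "sat S (avoid_fm x b n) \<sigma> \<longleftrightarrow> (\<forall>t<n. \<sigma> x \<noteq> \<sigma> (b + t))"
  by (auto simp: avoid_fm_def)

lemma sat_obstruction_fm: "finite Dl \<Longrightarrow> sat S (obstruction_fm ms Dl) \<sigma> \<longleftrightarrow>
   (\<exists>k\<in>Dl. \<forall>s<k. \<exists>i<length ms.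
      s_cong S k 0 (s_add S (tval S \<sigma> (mulT (ms ! i * s) One)) (\<sigma> i)))"
  by (auto simp: obstruction_fm_def)

context Z_model
begin

lemma random_fm_valid:
  assumes "finite Dl"
    and random: "\<And>bs bs'. length bs = length ms \<Longrightarrow> length bs' = length ms' \<Longrightarrow>
      (\<forall>i<length ms. \<forall>j<length ms'. (ms ! i, bs ! i) \<noteq> (ms' ! j, bs' ! j)) \<Longrightarrow>
      infinite {a. (\<forall>i<length ms. s_add M (smul M (ms ! i) a) (bs ! i) \<in> D) \<and>
                   (\<forall>j<length ms'. s_add M (smul M (ms' ! j) a) (bs' ! j) \<notin> D)} \<or>
      (\<exists>k\<in>Dl. \<forall>s<k. \<exists>i<length ms.
         s_cong M k 0 (s_add M (smul M (ms ! i * s) (s_one M)) (bs ! i)))"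
  shows "sat (expand M D) (random_fm ms ms' n Dl) \<sigma>"
proof -
  define r where "r = length ms + length ms'"
  define bs where "bs = map \<sigma> [0..<length ms]"
  define bs' where "bs' = map (\<lambda>j. \<sigma> (length ms + j)) [0..<length ms']"
  have bs: "\<And>i. i < length ms \<Longrightarrow> bs ! i = \<sigma> i"
    and bs': "\<And>j. j < length ms' \<Longrightarrow> bs' ! j = \<sigma> (length ms + j)"
    by (simp_all add: bs_def bs'_def)
  have "sat (expand M D) (Ex (r + n) (Conj (pattern_fm ms ms' (r + n)) (avoid_fm (r + n) r n))) \<sigma>
      \<or> sat (expand M D) (obstruction_fm ms Dl) \<sigma>"
    if "sat (expand M D) (distinct_fm ms ms') \<sigma>"
  proof -
    let ?S = "{a. (\<forall>i<length ms. s_add M (smul M (ms ! i) a) (bs ! i) \<in> D) \<and>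
                   (\<forall>j<length ms'. s_add M (smul M (ms' ! j) a) (bs' ! j) \<notin> D)}"
    have "\<forall>i<length ms. \<forall>j<length ms'. (ms ! i, bs ! i) \<noteq> (ms' ! j, bs' ! j)"
      using that by (auto simp: sat_distinct_fm bs bs')
    then consider (pattern) "infinite ?S" | (obstruction) k where "k \<in> Dl" "\<forall>s<k. \<exists>i<length ms.
         s_cong M k 0 (s_add M (smul M (ms ! i * s) (s_one M)) (bs ! i))"
      using random[of bs bs'] by (auto simp: bs_def bs'_def)
    then show ?thesis
    proof cases
      case pattern
      then have "infinite (?S - \<sigma> ` {r..<r + n})"
        by (simp add: Diff_infinite_finite)
      then obtain a where "a \<in> ?S - \<sigma> ` {r..<r + n}"
        using infinite_imp_nonempty by blast
      then have "sat (expand M D) (Conj (pattern_fm ms ms' (r + n)) (avoid_fm (r + n) r n))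
          (\<sigma>(r + n := a))"
        by (auto simp: sat_pattern_fm sat_avoid_fm tval_mulT_smul bs bs' r_def)
      then show ?thesis by auto
    next
      case obstruction
      have "\<exists>i<length ms. s_cong M k 0 (s_add M (smul M (ms ! i * s) (s_one M)) (\<sigma> i))"
        if "s < k" for s
        using obstruction(2) that bs by fastforce
      then have "sat (expand M D) (obstruction_fm ms Dl) \<sigma>"
        using obstruction(1) \<open>finite Dl\<close> by (auto simp: sat_obstruction_fm tval_mulT_smul)
      then show ?thesis ..

    qed
  qed
  then show ?thesis by (auto simp: random_fm_def r_def Let_def)
qed

lemma standard_if_in_P_cong_U:
  assumes "{x \<in> D. s_cong M k 0 x} \<subseteq> range e" "finite {x \<in> D. s_cong M k 0 x}"
    and "in_P x" "cong_U k 0 x"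
  shows "x \<in> range num"
proof -
  define F where "F = e -` {x \<in> D. s_cong M k 0 x}"
  have "finite F"
    unfolding F_def by (rule finite_vimageI) (use assms(2) inj_e in auto)
  have "sat (expand M D) (FImp (Conj (Pr (Var 0)) (Cong k 0 (Var 0)))
      (bigOr (map (\<lambda>n. Eq (Var 0) (numT n)) (sorted_list_of_set F)))) \<sigma>" for \<sigma>
  proof -
    have "\<sigma> 0 \<in> e ` F" if "\<sigma> 0 \<in> D" "s_cong M k 0 (\<sigma> 0)"
      using assms(1) that unfolding F_def image_vimage_eq by blast
    then show ?thesis using \<open>finite F\<close> by (auto simp: tval_M_numT)
  qed
  then have "sat U (FImp (Conj (Pr (Var 0)) (Cong k 0 (Var 0)))
      (bigOr (map (\<lambda>n. Eq (Var 0) (numT n)) (sorted_list_of_set F)))) ((!) [x])"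
    by (rule transfer_from_M)
  then show ?thesis using assms(3,4) \<open>finite F\<close> by auto
qed

lemma pattern_or_obstruction_U:
  assumes "finite Dl"
    and random: "\<And>bs bs'. length bs = length ms \<Longrightarrow> length bs' = length ms' \<Longrightarrow>
      (\<forall>i<length ms. \<forall>j<length ms'. (ms ! i, bs ! i) \<noteq> (ms' ! j, bs' ! j)) \<Longrightarrow>
      infinite {a. (\<forall>i<length ms. s_add M (smul M (ms ! i) a) (bs ! i) \<in> D) \<and>
                   (\<forall>j<length ms'. s_add M (smul M (ms' ! j) a) (bs' ! j) \<notin> D)} \<or>
      (\<exists>k\<in>Dl. \<forall>s<k. \<exists>i<length ms.
         s_cong M k 0 (s_add M (smul M (ms ! i * s) (s_one M)) (bs ! i)))"
    and "length bs = length ms" "length bs' = length ms'"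
    and "\<forall>i<length ms. \<forall>j<length ms'. (ms ! i, bs ! i) \<noteq> (ms' ! j, bs' ! j)"
  shows "(\<exists>x. x \<notin> set ys \<and> (\<forall>i<length ms. in_P (ms ! i \<cdot> x \<oplus> bs ! i)) \<and>
           (\<forall>j<length ms'. \<not> in_P (ms' ! j \<cdot> x \<oplus> bs' ! j))) \<or>
    (\<exists>k\<in>Dl. \<forall>s<k. \<exists>i<length ms. cong_U k 0 ((ms ! i * s) \<cdot> \<one> \<oplus> bs ! i))"
proof -
  let ?r = "length ms + length ms'"
  let ?\<rho> = "(!) (bs @ bs' @ ys)"
  have "sat U (random_fm ms ms' (length ys) Dl) ?\<rho>"
    by (intro transfer_from_M random_fm_valid[OF \<open>finite Dl\<close> random])
  moreover have "sat U (distinct_fm ms ms') ?\<rho>"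
    using assms(3-5) by (auto simp: sat_distinct_fm nth_append)
  ultimately consider
    x where "sat U (Conj (pattern_fm ms ms' (?r + length ys)) (avoid_fm (?r + length ys) ?r (length ys)))
      (?\<rho>(?r + length ys := x))"
    | "sat U (obstruction_fm ms Dl) ?\<rho>"
    by (auto simp: random_fm_def Let_def)
  then show ?thesis
  proof cases
    case 1
    then have "x \<notin> set ys"
      by (auto simp: sat_avoid_fm in_set_conv_nth nth_append assms(3,4))
    with 1 show ?thesis
      by (auto simp: sat_pattern_fm nth_append assms(3,4))
  next
    case 2
    then obtain k where "k \<in> Dl" "\<forall>s<k. \<exists>i<length ms. cong_U k 0 ((ms ! i * s) \<cdot> \<one> \<oplus> ?\<rho> i)"
      using \<open>finite Dl\<close> by (auto simp: sat_obstruction_fm)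
    moreover have "?\<rho> i = bs ! i" if "i < length ms" for i
      using that assms(3) by (simp add: nth_append)
    ultimately show ?thesis by fastforce
  qed
qed

end

locale random_Z_model = Z_model +
  assumes rand: "additively_random M e D"
    and symm: "\<forall>a. a \<in> D \<longleftrightarrow> s_neg M a \<in> D"
begin

lemma in_P_neg: "in_P (\<ominus>x) \<longleftrightarrow> in_P x"
  using transfer_from_M[of "FIff (Pr (Var 0)) (Pr (Neg (Var 0)))" "(!) [x]"] symm by auto

lemma additively_random_U:
  assumes "\<forall>m\<in>set ms. 1 \<le> m" "\<forall>m\<in>set ms'. 1 \<le> m"
  obtains Dl where "finite Dl" "\<forall>k\<in>Dl. 0 < k"
    and "\<And>k x. k \<in> Dl \<Longrightarrow> in_P x \<Longrightarrow> cong_U k 0 x \<Longrightarrow> x \<in> range num"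
    and "\<And>bs bs' ys. length bs = length ms \<Longrightarrow> length bs' = length ms' \<Longrightarrow>
      (\<forall>i<length ms. \<forall>j<length ms'. (ms ! i, bs ! i) \<noteq> (ms' ! j, bs' ! j)) \<Longrightarrow>
      (\<exists>x. x \<notin> set ys \<and> (\<forall>i<length ms. in_P (ms ! i \<cdot> x \<oplus> bs ! i)) \<and>
           (\<forall>j<length ms'. \<not> in_P (ms' ! j \<cdot> x \<oplus> bs' ! j))) \<or>
      (\<exists>k\<in>Dl. \<forall>s<k. \<exists>i<length ms. cong_U k 0 ((ms ! i * s) \<cdot> \<one> \<oplus> bs ! i))"
proof -
  obtain \<chi> Dl where "finite Dl" and Dl_pos: "\<forall>k\<in>Dl. 1 \<le> k"
    and P12: "\<forall>bs bs'. length bs = length ms \<and> length bs' = length ms' \<and>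
            (\<forall>i<length ms. \<forall>j<length ms'. (ms ! i, bs ! i) \<noteq> (ms' ! j, bs' ! j)) \<longrightarrow>
            (sat M \<chi> (zasg bs bs') \<longrightarrow>
               infinite {a. (\<forall>i<length ms. s_add M (smul M (ms ! i) a) (bs ! i) \<in> D) \<and>
                            (\<forall>j<length ms'. s_add M (smul M (ms' ! j) a) (bs' ! j) \<notin> D)}) \<and>
            (\<not> sat M \<chi> (zasg bs bs') \<longrightarrow>
               1 \<le> length ms \<and>
               (\<exists>k\<in>Dl. \<forall>s<k. \<exists>i<length ms.
                   s_cong M k 0 (s_add M (smul M (ms ! i * s) (s_one M)) (bs ! i))))"
    and P3: "\<forall>k\<in>Dl. {x \<in> D. s_cong M k 0 x} \<subseteq> range e \<and> finite {x \<in> D. s_cong M k 0 x}"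
    using rand[unfolded additively_random_def, rule_format, OF conjI[OF assms]] by blast
  have random: "infinite {a. (\<forall>i<length ms. s_add M (smul M (ms ! i) a) (cs ! i) \<in> D) \<and>
                   (\<forall>j<length ms'. s_add M (smul M (ms' ! j) a) (cs' ! j) \<notin> D)} \<or>
      (\<exists>k\<in>Dl. \<forall>s<k. \<exists>i<length ms.
         s_cong M k 0 (s_add M (smul M (ms ! i * s) (s_one M)) (cs ! i)))"
    if "length cs = length ms" "length cs' = length ms'"
      "\<forall>i<length ms. \<forall>j<length ms'. (ms ! i, cs ! i) \<noteq> (ms' ! j, cs' ! j)" for cs cs'
    using P12 that by blast
  show ?thesis
  proof (rule that[OF \<open>finite Dl\<close>])
    show "\<forall>k\<in>Dl. 0 < k" using Dl_pos by auto
    show "x \<in> range num" if "k \<in> Dl" "in_P x" "cong_U k 0 x" for k x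
      using standard_if_in_P_cong_U P3 that by blast
    show "(\<exists>x. x \<notin> set ys \<and> (\<forall>i<length ms. in_P (ms ! i \<cdot> x \<oplus> bs ! i)) \<and>
           (\<forall>j<length ms'. \<not> in_P (ms' ! j \<cdot> x \<oplus> bs' ! j))) \<or>
      (\<exists>k\<in>Dl. \<forall>s<k. \<exists>i<length ms. cong_U k 0 ((ms ! i * s) \<cdot> \<one> \<oplus> bs ! i))"
      if "length bs = length ms" "length bs' = length ms'"
        "\<forall>i<length ms. \<forall>j<length ms'. (ms ! i, bs ! i) \<noteq> (ms' ! j, bs' ! j)" for bs bs' ys
      using pattern_or_obstruction_U[OF \<open>finite Dl\<close> random that] .
  qed
qed

definition in_mult_P :: "nat \<Rightarrow> 'b \<Rightarrow> bool"
  where "in_mult_P m y \<longleftrightarrow> (\<exists>w. m \<cdot> w = y \<and> in_P w)"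

lemma in_mult_P_1: "in_mult_P 1 y \<longleftrightarrow> in_P y"
  by (metis in_mult_P_def nmul_1)

lemma in_mult_P_nmul: "1 \<le> m \<Longrightarrow> in_mult_P m (m \<cdot> z) \<longleftrightarrow> in_P z"
  by (auto simp: in_mult_P_def)

lemma in_mult_P_nmul_nmul: "1 \<le> m \<Longrightarrow> in_mult_P (m * m') (m \<cdot> y) \<longleftrightarrow> in_mult_P m' y"
  by (auto simp: in_mult_P_def nmul_mult)

lemma in_mult_P_neg: "in_mult_P m (\<ominus>y) \<longleftrightarrow> in_mult_P m y"
  unfolding in_mult_P_def by (metis U_group.inverse_inverse in_P_neg nmul_neg)

lemma in_mult_P_zmul_neg:
  "a < 0 \<Longrightarrow> in_mult_P m (zmul a u \<oplus> y) \<longleftrightarrow> in_mult_P m (nat (- a) \<cdot> u \<oplus> \<ominus>y)"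
  using in_mult_P_neg[of m "zmul a u \<oplus> y"] by (simp add: zmul_def neg_U_add)

lemma cong_U_if_in_mult_P: "in_mult_P m y \<Longrightarrow> 0 < m \<Longrightarrow> cong_U m 0 y"
  using cong_U_0_iff by (auto simp: in_mult_P_def)

lemma in_mult_P_coset_iff:
  assumes "1 \<le> m" "q * m = a * K" "num (int (a * r)) \<oplus> y = m \<cdot> b"
  shows "in_mult_P m (a \<cdot> (K \<cdot> x \<oplus> num (int r)) \<oplus> y) \<longleftrightarrow> in_P (q \<cdot> x \<oplus> b)"
  using affine_eq_nmul[OF assms(2) assms(3)[symmetric]] in_mult_P_nmul[OF assms(1)] by simp

lemma not_in_mult_P_coset:
  assumes "0 < m" "m dvd K" "\<not> cong_U m 0 (num (int (a * r)) \<oplus> y)"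
  shows "\<not> in_mult_P m (a \<cdot> (K \<cdot> x \<oplus> num (int r)) \<oplus> y)"
  using cong_U_if_in_mult_P[OF _ assms(1)] cong_U_0_affine_iff[OF assms(1,2)] assms(3) by blast

lemma random_pattern_realisable:
  fixes Pos Neg :: "'c set" and q :: "'c \<Rightarrow> nat" and b c :: "'c \<Rightarrow> 'b"
  assumes "finite Pos" "finite Neg" "finite Y"
    and q: "\<And>i. i \<in> Pos \<union> Neg \<Longrightarrow> 1 \<le> q i"
    and distinct: "\<And>i j. i \<in> Pos \<Longrightarrow> j \<in> Neg \<Longrightarrow> (q i, b i) \<noteq> (q j, b j)"
    and residues: "\<And>i k j. i \<in> Pos \<Longrightarrow> cong_U k j (b i) \<longleftrightarrow> cong_U k j (c i)"
    and witness: "\<And>i. i \<in> Pos \<Longrightarrow> in_P (q i \<cdot> w \<oplus> c i) \<and> q i \<cdot> w \<oplus> c i \<notin> range num"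
  obtains x where "x \<notin> Y" "\<And>i. i \<in> Pos \<Longrightarrow> in_P (q i \<cdot> x \<oplus> b i)"
    "\<And>j. j \<in> Neg \<Longrightarrow> \<not> in_P (q j \<cdot> x \<oplus> b j)"
proof -
  obtain ps ns ys where ps: "set ps = Pos" and ns: "set ns = Neg" and ys: "set ys = Y"
    using assms(1-3) finite_list by metis
  let ?ms = "map q ps" and ?ms' = "map q ns" and ?bs = "map b ps" and ?bs' = "map b ns"
  have "\<forall>m\<in>set ?ms. 1 \<le> m" "\<forall>m\<in>set ?ms'. 1 \<le> m"
    using q ps ns by auto
  then obtain Dl where "\<forall>k\<in>Dl. 0 < k"
    and standard: "\<And>k x. k \<in> Dl \<Longrightarrow> in_P x \<Longrightarrow> cong_U k 0 x \<Longrightarrow> x \<in> range num"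
    and pattern: "\<And>bs bs' ys. length bs = length ?ms \<Longrightarrow> length bs' = length ?ms' \<Longrightarrow>
      (\<forall>i<length ?ms. \<forall>j<length ?ms'. (?ms ! i, bs ! i) \<noteq> (?ms' ! j, bs' ! j)) \<Longrightarrow>
      (\<exists>x. x \<notin> set ys \<and> (\<forall>i<length ?ms. in_P (?ms ! i \<cdot> x \<oplus> bs ! i)) \<and>
           (\<forall>j<length ?ms'. \<not> in_P (?ms' ! j \<cdot> x \<oplus> bs' ! j))) \<or>
      (\<exists>k\<in>Dl. \<forall>s<k. \<exists>i<length ?ms. cong_U k 0 ((?ms ! i * s) \<cdot> \<one> \<oplus> bs ! i))"
    by (rule additively_random_U) blast
  have "\<forall>i<length ?ms. \<forall>j<length ?ms'. (?ms ! i, ?bs ! i) \<noteq> (?ms' ! j, ?bs' ! j)"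
    using distinct ps ns nth_mem by fastforce
  then consider
      (realised) x where "x \<notin> Y" "\<forall>i<length ps. in_P (q (ps ! i) \<cdot> x \<oplus> b (ps ! i))"
        "\<forall>j<length ns. \<not> in_P (q (ns ! j) \<cdot> x \<oplus> b (ns ! j))"
    | (obstruction) k where "k \<in> Dl" "\<forall>s<k. \<exists>i<length ps. cong_U k 0 ((?ms ! i * s) \<cdot> \<one> \<oplus> ?bs ! i)"
    using pattern[of ?bs ?bs' ys] ys by auto
  then show ?thesis
  proof cases
    case realised
    then show ?thesis
      using that ps ns by (metis in_set_conv_nth)
  next
    case obstruction
    \<comment> \<open>Taking \<open>s \<equiv> w (mod k)\<close> yields a \<open>p\<close> such that \<open>k\<close> divides \<open>q p\<cdot>w + c p \<in> P\<close>,
      which (P3) then makes standard.\<close>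
    obtain s where "s < k" and s: "cong_U k s w"
      using cong_U_exists \<open>\<forall>k\<in>Dl. 0 < k\<close> \<open>k \<in> Dl\<close> by metis
    with obstruction obtain i where "i < length ps"
      and "cong_U k 0 ((?ms ! i * s) \<cdot> \<one> \<oplus> ?bs ! i)"
      by blast
    then have i: "cong_U k 0 ((q (ps ! i) * s) \<cdot> \<one> \<oplus> b (ps ! i))"
      by simp
    define p where "p = ps ! i"
    have "p \<in> Pos" using \<open>i < length ps\<close> ps nth_mem unfolding p_def by blast
    have "cong_U k j (num (int s)) \<longleftrightarrow> cong_U k j w" for j
      using cong_U_num[OF \<open>s < k\<close>] s cong_U_unique by metis
    then have "cong_U k 0 (zmul (int (q p)) (num (int s)) \<oplus> b p) \<longleftrightarrow> cong_U k 0 (zmul (int (q p)) w \<oplus> c p)"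
      using residues[OF \<open>p \<in> Pos\<close>] by (rule cong_U_add_zmul)
    then have "cong_U k 0 (q p \<cdot> w \<oplus> c p)"
      using i by (simp add: p_def num_of_nat nmul_mult)
    then show ?thesis
      using standard[OF \<open>k \<in> Dl\<close>] witness[OF \<open>p \<in> Pos\<close>] by blast
  qed
qed

text \<open>For \<open>v = K\<cdot>x + r\<close> a condition \<open>a\<cdot>v + y \<in> m\<cdot>P\<close> either fails for all \<open>x\<close> (if \<open>m\<close> does not
  divide \<open>a\<cdot>r + y\<close>) or says \<open>q\<cdot>x + b \<in> P\<close> with \<open>m\<cdot>b = a\<cdot>r + y\<close>. The resulting pattern in
  \<open>x\<close> is realised by additive randomness, with \<open>w\<close> (where \<open>u = K\<cdot>w + r\<close>) as witness against
  the obstruction.\<close>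

lemma realise_in_mult_P_conditions_coset:
  fixes C :: "'c set" and m a :: "'c \<Rightarrow> nat" and yt ys :: "'c \<Rightarrow> 'b"
  assumes "finite C" "finite X" "0 < K"
    and ma: "\<And>c. c \<in> C \<Longrightarrow> 1 \<le> m c \<and> 1 \<le> a c \<and> m c dvd K"
    and residues: "\<And>c k j. c \<in> C \<Longrightarrow> cong_U k j (yt c) \<longleftrightarrow> cong_U k j (ys c)"
    and relations: "\<And>c c'. c \<in> C \<Longrightarrow> c' \<in> C \<Longrightarrow> m c' \<cdot> yt c = m c \<cdot> yt c' \<Longrightarrow>
      m c' \<cdot> ys c = m c \<cdot> ys c'"
    and nonstandard: "\<And>c. c \<in> C \<Longrightarrow> a c \<cdot> u \<oplus> ys c \<notin> range num"
    and u: "u = K \<cdot> w \<oplus> num (int r)"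
  obtains x where "x \<notin> X"
    "\<And>c. c \<in> C \<Longrightarrow> in_mult_P (m c) (a c \<cdot> (K \<cdot> x \<oplus> num (int r)) \<oplus> yt c) \<longleftrightarrow>
      in_mult_P (m c) (a c \<cdot> u \<oplus> ys c)"
proof -
  define q where "q c = a c * K div m c" for c
  have qm: "q c * m c = a c * K" if "c \<in> C" for c
    using ma[OF that] unfolding q_def by (simp add: dvd_div_mult_self dvd_mult)
  have q: "1 \<le> q c" if "c \<in> C" for c
  proof -
    have "0 < q c * m c" using qm[OF that] ma[OF that] \<open>0 < K\<close> by simp
    then show ?thesis by (simp add: Suc_le_eq)
  qed
  define Cd where "Cd = {c \<in> C. cong_U (m c) 0 (num (int (a c * r)) \<oplus> ys c)}"
  define bt where "bt c = (SOME b. num (int (a c * r)) \<oplus> yt c = m c \<cdot> b)" for c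
  define bs where "bs c = (SOME b. num (int (a c * r)) \<oplus> ys c = m c \<cdot> b)" for c
  have shifted_residues: "cong_U k j (num n \<oplus> yt c) \<longleftrightarrow> cong_U k j (num n \<oplus> ys c)"
    if "c \<in> C" for c k j n
    using cong_U_num_add_iff residues[OF that] by blast
  have Cd_iff: "cong_U (m c) 0 (num (int (a c * r)) \<oplus> yt c) \<longleftrightarrow> c \<in> Cd" if "c \<in> C" for c
    using that shifted_residues by (simp add: Cd_def)
  have bt: "num (int (a c * r)) \<oplus> yt c = m c \<cdot> bt c"
    and bs: "num (int (a c * r)) \<oplus> ys c = m c \<cdot> bs c" if "c \<in> Cd" for c
  proof -
    have "c \<in> C" "0 < m c" using that ma by (auto simp: Cd_def Suc_le_eq)
    then have "cong_U (m c) 0 (num (int (a c * r)) \<oplus> yt c)" "cong_U (m c) 0 (num (int (a c * r)) \<oplus> ys c)"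
      using that Cd_iff by (simp_all add: Cd_def)
    then have t: "\<exists>b. num (int (a c * r)) \<oplus> yt c = m c \<cdot> b"
      and s: "\<exists>b. num (int (a c * r)) \<oplus> ys c = m c \<cdot> b"
      unfolding cong_U_0_iff[OF \<open>0 < m c\<close>] by simp_all
    show "num (int (a c * r)) \<oplus> yt c = m c \<cdot> bt c"
      using someI_ex[OF t] by (simp add: bt_def)
    show "num (int (a c * r)) \<oplus> ys c = m c \<cdot> bs c"
      using someI_ex[OF s] by (simp add: bs_def)
  qed
  have residues_b: "cong_U k j (bt c) \<longleftrightarrow> cong_U k j (bs c)" if "c \<in> Cd" for c k j
  proof (rule cong_U_nmul_cancel)
    show "1 \<le> m c" using that ma by (auto simp: Cd_def)
    show "cong_U k' j' (m c \<cdot> bt c) \<longleftrightarrow> cong_U k' j' (m c \<cdot> bs c)" for k' j'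
      unfolding bt[OF that, symmetric] bs[OF that, symmetric]
      using that shifted_residues by (simp add: Cd_def)
  qed
  have yt_iff: "in_mult_P (m c) (a c \<cdot> (K \<cdot> x \<oplus> num (int r)) \<oplus> yt c) \<longleftrightarrow>
      c \<in> Cd \<and> in_P (q c \<cdot> x \<oplus> bt c)" if "c \<in> C" for c x
    using in_mult_P_coset_iff[OF _ qm bt] not_in_mult_P_coset Cd_iff that ma[OF that]
    by (cases "c \<in> Cd") (auto simp: Suc_le_eq)
  have ys_iff: "in_mult_P (m c) (a c \<cdot> u \<oplus> ys c) \<longleftrightarrow> c \<in> Cd \<and> in_P (q c \<cdot> w \<oplus> bs c)"
    if "c \<in> C" for c
    using in_mult_P_coset_iff[OF _ qm bs] not_in_mult_P_coset that ma[OF that] u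
    by (cases "c \<in> Cd") (auto simp: Cd_def Suc_le_eq)
  define Pos where "Pos = {c \<in> Cd. in_P (q c \<cdot> w \<oplus> bs c)}"
  define Neg where "Neg = Cd - Pos"
  have "finite Pos" "finite Neg"
    using \<open>finite C\<close> by (auto simp: Pos_def Neg_def Cd_def)
  have q_pos: "1 \<le> q c" if "c \<in> Pos \<union> Neg" for c
    using that q by (auto simp: Pos_def Neg_def Cd_def)
  have residues_Pos: "cong_U k j (bt c) \<longleftrightarrow> cong_U k j (bs c)" if "c \<in> Pos" for c k j
    using that residues_b by (simp add: Pos_def)
  have distinct: "(q i, bt i) \<noteq> (q j, bt j)" if "i \<in> Pos" "j \<in> Neg" for i j
  proof
    assume eq: "(q i, bt i) = (q j, bt j)"
    have "i \<in> Cd" "j \<in> Cd" "i \<in> C" "j \<in> C" using that by (auto simp: Pos_def Neg_def Cd_def)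
    have m: "1 \<le> m i" "1 \<le> m j" using ma \<open>i \<in> C\<close> \<open>j \<in> C\<close> by auto
    have "K * (a i * m j) = q i * m i * m j"
      using qm[OF \<open>i \<in> C\<close>] by (simp add: ac_simps)
    also have "\<dots> = K * (a j * m i)"
      using qm[OF \<open>j \<in> C\<close>] eq by (simp add: ac_simps)
    finally have am: "a i * m j = a j * m i"
      using \<open>0 < K\<close> by simp
    have "m j \<cdot> yt i = m i \<cdot> yt j"
      using root_eq_iff[OF m am bt[OF \<open>i \<in> Cd\<close>, symmetric] bt[OF \<open>j \<in> Cd\<close>, symmetric]] eq by simp
    then have "bs i = bs j"
      using root_eq_iff[OF m am bs[OF \<open>i \<in> Cd\<close>, symmetric] bs[OF \<open>j \<in> Cd\<close>, symmetric]]
        relations[OF \<open>i \<in> C\<close> \<open>j \<in> C\<close>] by simp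
    then show False using that eq by (simp add: Pos_def Neg_def)
  qed
  have witness: "in_P (q c \<cdot> w \<oplus> bs c) \<and> q c \<cdot> w \<oplus> bs c \<notin> range num" if "c \<in> Pos" for c
  proof -
    have "c \<in> Cd" "c \<in> C" using that by (auto simp: Pos_def Cd_def)
    have "a c \<cdot> u \<oplus> ys c = m c \<cdot> (q c \<cdot> w \<oplus> bs c)"
      using affine_eq_nmul[OF qm[OF \<open>c \<in> C\<close>] bs[OF \<open>c \<in> Cd\<close>, symmetric]] u by simp
    then have "q c \<cdot> w \<oplus> bs c \<notin> range num"
      using nonstandard[OF \<open>c \<in> C\<close>] by (auto simp: nmul_num)
    then show ?thesis using that by (simp add: Pos_def)
  qed
  obtain x where "x \<notin> X" and Pos: "\<And>c. c \<in> Pos \<Longrightarrow> in_P (q c \<cdot> x \<oplus> bt c)"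
    and Neg: "\<And>c. c \<in> Neg \<Longrightarrow> \<not> in_P (q c \<cdot> x \<oplus> bt c)"
    using random_pattern_realisable[where q = q and b = bt and c = bs and w = w,
        OF \<open>finite Pos\<close> \<open>finite Neg\<close> \<open>finite X\<close> q_pos distinct
        residues_Pos witness] by blast
  show ?thesis
  proof (rule that[OF \<open>x \<notin> X\<close>])
    fix c assume "c \<in> C"
    show "in_mult_P (m c) (a c \<cdot> (K \<cdot> x \<oplus> num (int r)) \<oplus> yt c) \<longleftrightarrow>
        in_mult_P (m c) (a c \<cdot> u \<oplus> ys c)"
      using yt_iff[OF \<open>c \<in> C\<close>] ys_iff[OF \<open>c \<in> C\<close>] Pos Neg by (auto simp: Pos_def Neg_def)
  qed
qed

lemma realise_in_mult_P_conditions: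
  fixes C :: "'c set" and m a :: "'c \<Rightarrow> nat" and yt ys :: "'c \<Rightarrow> 'b"
  assumes "finite C" "finite Ks" "finite Y"
    and Ks: "\<And>k. k \<in> Ks \<Longrightarrow> 0 < k"
    and ma: "\<And>c. c \<in> C \<Longrightarrow> 1 \<le> m c \<and> 1 \<le> a c"
    and residues: "\<And>c k j. c \<in> C \<Longrightarrow> cong_U k j (yt c) \<longleftrightarrow> cong_U k j (ys c)"
    and relations: "\<And>c c'. c \<in> C \<Longrightarrow> c' \<in> C \<Longrightarrow> m c' \<cdot> yt c = m c \<cdot> yt c' \<Longrightarrow>
      m c' \<cdot> ys c = m c \<cdot> ys c'"
    and nonstandard: "\<And>c. c \<in> C \<Longrightarrow> a c \<cdot> u \<oplus> ys c \<notin> range num"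
  obtains v where "\<And>k j. k \<in> Ks \<Longrightarrow> cong_U k j v \<longleftrightarrow> cong_U k j u" "v \<notin> Y"
    "\<And>c. c \<in> C \<Longrightarrow> in_mult_P (m c) (a c \<cdot> v \<oplus> yt c) \<longleftrightarrow> in_mult_P (m c) (a c \<cdot> u \<oplus> ys c)"
proof -
  define K where "K = \<Prod>Ks * (\<Prod>c\<in>C. m c)"
  have "0 < K"
    using Ks ma by (simp add: K_def prod_pos Suc_le_eq)
  have Ks_dvd: "k dvd K" if "k \<in> Ks" for k
    using that \<open>finite Ks\<close> unfolding K_def by (intro dvd_mult2 dvd_prodI) auto
  have m_dvd: "m c dvd K" if "c \<in> C" for c
    using that \<open>finite C\<close> unfolding K_def by (intro dvd_mult dvd_prodI) auto
  obtain r where "r < K" and r: "cong_U K r u"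
    using cong_U_exists[OF \<open>0 < K\<close>] by metis
  then obtain w where u: "u = K \<cdot> w \<oplus> num (int r)"
    using cong_U_iff[OF \<open>0 < K\<close>] by blast
  define X where "X = (\<lambda>x. K \<cdot> x \<oplus> num (int r)) -` Y"
  have "finite X"
    unfolding X_def using \<open>finite Y\<close> inj_affine \<open>0 < K\<close> by (intro finite_vimageI) auto
  have ma': "1 \<le> m c \<and> 1 \<le> a c \<and> m c dvd K" if "c \<in> C" for c
    using ma[OF that] m_dvd[OF that] by blast
  obtain x where "x \<notin> X" and x: "\<And>c. c \<in> C \<Longrightarrow>
      in_mult_P (m c) (a c \<cdot> (K \<cdot> x \<oplus> num (int r)) \<oplus> yt c) \<longleftrightarrow> in_mult_P (m c) (a c \<cdot> u \<oplus> ys c)"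
    using realise_in_mult_P_conditions_coset[where C = C and m = m and a = a and yt = yt and ys = ys,
        OF \<open>finite C\<close> \<open>finite X\<close> \<open>0 < K\<close> ma' residues relations nonstandard u] by blast
  have "cong_U K r (K \<cdot> x \<oplus> num (int r))"
    using cong_U_iff[OF \<open>0 < K\<close> \<open>r < K\<close>] by blast
  then have "cong_U k j (K \<cdot> x \<oplus> num (int r)) \<longleftrightarrow> cong_U k j u" if "k \<in> Ks" for k j
    using residues_eq_if_dvd[OF Ks_dvd[OF that] _ r] by blast
  moreover have "K \<cdot> x \<oplus> num (int r) \<notin> Y"
    using \<open>x \<notin> X\<close> by (simp add: X_def)
  ultimately show ?thesis
    using that x by blast
qed

section \<open>A back-and-forth system\<close>

definition qf_equiv :: "(nat \<Rightarrow> 'b) \<Rightarrow> (nat \<Rightarrow> 'b) \<Rightarrow> nat set \<Rightarrow> bool"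
  where "qf_equiv \<sigma> \<tau> V \<longleftrightarrow> (\<forall>t. tvars t \<subseteq> V \<longrightarrow>
     (\<forall>k j. cong_U k j (tval U \<sigma> t) \<longleftrightarrow> cong_U k j (tval U \<tau> t)) \<and>
     (tval U \<sigma> t = \<zero> \<longleftrightarrow> tval U \<tau> t = \<zero>) \<and>
     (\<forall>m\<ge>1. in_mult_P m (tval U \<sigma> t) \<longleftrightarrow> in_mult_P m (tval U \<tau> t)))"

definition independent :: "(nat \<Rightarrow> 'b) \<Rightarrow> nat set \<Rightarrow> 'b \<Rightarrow> bool"
  where "independent \<sigma> V u \<longleftrightarrow> (\<forall>m\<ge>1. \<forall>t. tvars t \<subseteq> V \<longrightarrow> m \<cdot> u \<noteq> tval U \<sigma> t)"

lemma qf_equiv_sym: "qf_equiv \<sigma> \<tau> V \<Longrightarrow> qf_equiv \<tau> \<sigma> V"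
  unfolding qf_equiv_def by metis

lemma qf_equiv_mono: "qf_equiv \<sigma> \<tau> V \<Longrightarrow> W \<subseteq> V \<Longrightarrow> qf_equiv \<sigma> \<tau> W"
  unfolding qf_equiv_def by (meson order_trans)

lemma qf_equivD:
  assumes "qf_equiv \<sigma> \<tau> V" "tvars t \<subseteq> V"
  shows "cong_U k j (tval U \<sigma> t) \<longleftrightarrow> cong_U k j (tval U \<tau> t)"
    and "tval U \<sigma> t = \<zero> \<longleftrightarrow> tval U \<tau> t = \<zero>"
    and "1 \<le> m \<Longrightarrow> in_mult_P m (tval U \<sigma> t) \<longleftrightarrow> in_mult_P m (tval U \<tau> t)"
  using assms unfolding qf_equiv_def by blast+

lemma qf_equivI:
  assumes "\<And>t k j. tvars t \<subseteq> V \<Longrightarrow> cong_U k j (tval U \<sigma> t) \<longleftrightarrow> cong_U k j (tval U \<tau> t)"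
    and "\<And>t. tvars t \<subseteq> V \<Longrightarrow> tval U \<sigma> t = \<zero> \<longleftrightarrow> tval U \<tau> t = \<zero>"
    and "\<And>t m. tvars t \<subseteq> V \<Longrightarrow> 1 \<le> m \<Longrightarrow> in_mult_P m (tval U \<sigma> t) \<longleftrightarrow> in_mult_P m (tval U \<tau> t)"
  shows "qf_equiv \<sigma> \<tau> V"
  using assms unfolding qf_equiv_def by blast

lemma independent_zmul_add_ne_0:
  assumes "independent \<sigma> V u" "a \<noteq> 0" "tvars t \<subseteq> V"
  shows "zmul a u \<oplus> tval U \<sigma> t \<noteq> \<zero>"
proof
  assume sum: "zmul a u \<oplus> tval U \<sigma> t = \<zero>"
  show False
  proof (cases "0 < a")
    case True
    then have "nat a \<cdot> u = tval U \<sigma> (Neg t)" "1 \<le> nat a"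
      using sum by (simp_all add: add_U_eq_0_iff zmul_def)
    moreover have "tvars (Neg t) \<subseteq> V" using assms(3) by simp
    ultimately show False using assms(1) unfolding independent_def by blast
  next
    case False
    then have "nat (- a) \<cdot> u = tval U \<sigma> t" "1 \<le> nat (- a)"
      using sum assms(2) by (simp_all add: add_U_eq_0_iff zmul_def)
    then show False using assms(1,3) unfolding independent_def by blast
  qed
qed

lemma independent_add_U_nonstandard:
  assumes "independent \<sigma> V u" "1 \<le> a" "tvars t \<subseteq> V"
  shows "a \<cdot> u \<oplus> tval U \<sigma> t \<notin> range num"
proof
  assume "a \<cdot> u \<oplus> tval U \<sigma> t \<in> range num"
  then obtain n where "a \<cdot> u \<oplus> tval U \<sigma> t = num n"
    by auto
  then have "a \<cdot> u = tval U \<sigma> (Add (numT n) (Neg t))"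
    by (simp add: add_U_eq_iff)
  moreover have "tvars (Add (numT n) (Neg t)) \<subseteq> V" using assms(3) by simp
  ultimately show False using assms(1,2) unfolding independent_def by blast
qed

lemma qf_equiv_extend_dependent:
  assumes qf: "qf_equiv \<sigma> \<tau> V" and "x \<notin> V" and m: "1 \<le> m" and t0: "tvars t0 \<subseteq> V"
    and u: "m \<cdot> u = tval U \<sigma> t0"
  obtains v where "qf_equiv (\<sigma>(x := u)) (\<tau>(x := v)) (insert x V)"
proof -
  have "0 < m" using m by simp
  then have "cong_U m 0 (tval U \<sigma> t0)" using u cong_U_0_iff by metis
  then have "cong_U m 0 (tval U \<tau> t0)" using qf_equivD(1)[OF qf t0] by blast
  then obtain v where v: "m \<cdot> v = tval U \<tau> t0" using cong_U_0_iff \<open>0 < m\<close> by metis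
  have scaled: "m \<cdot> tval U (\<rho>(x := w)) t = tval U \<rho> (Add (zmulT (coeff x t) t0) (mulT m (rest x t)))"
    if "m \<cdot> w = tval U \<rho> t0" for \<rho> w t
  proof -
    have "m \<cdot> tval U (\<rho>(x := w)) t = m \<cdot> (zmul (coeff x t) w \<oplus> tval U \<rho> (rest x t))"
      using tval_U_coeff_rest[of "\<rho>(x := w)" t x] by simp
    also have "\<dots> = zmul (coeff x t) (m \<cdot> w) \<oplus> m \<cdot> tval U \<rho> (rest x t)"
      by (simp add: nmul_add_distrib nmul_zmul) (metis zmul_mult zmul_of_nat mult.commute)
    finally show ?thesis using that by simp
  qed
  have "qf_equiv (\<sigma>(x := u)) (\<tau>(x := v)) (insert x V)"
  proof (rule qf_equivI)
    fix t assume "tvars t \<subseteq> insert x V"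
    define t' where "t' = Add (zmulT (coeff x t) t0) (mulT m (rest x t))"
    have t': "tvars t' \<subseteq> V" using \<open>tvars t \<subseteq> insert x V\<close> t0 by (auto simp: t'_def)
    have \<sigma>: "m \<cdot> tval U (\<sigma>(x := u)) t = tval U \<sigma> t'" using scaled[OF u] by (simp add: t'_def)
    have \<tau>: "m \<cdot> tval U (\<tau>(x := v)) t = tval U \<tau> t'" using scaled[OF v] by (simp add: t'_def)
    show "cong_U k j (tval U (\<sigma>(x := u)) t) \<longleftrightarrow> cong_U k j (tval U (\<tau>(x := v)) t)" for k j
      using cong_U_nmul_iff[OF m, of k j] \<sigma> \<tau> qf_equivD(1)[OF qf t'] by metis
    show "tval U (\<sigma>(x := u)) t = \<zero> \<longleftrightarrow> tval U (\<tau>(x := v)) t = \<zero>"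
      using \<sigma> \<tau> qf_equivD(2)[OF qf t'] m by (metis nmul_cancel nmul_zero)
    show "in_mult_P m' (tval U (\<sigma>(x := u)) t) \<longleftrightarrow> in_mult_P m' (tval U (\<tau>(x := v)) t)"
      if "1 \<le> m'" for m'
    proof -
      have "1 \<le> m * m'" using m that by simp
      then show ?thesis using in_mult_P_nmul_nmul[OF m, of m'] \<sigma> \<tau> qf_equivD(3)[OF qf t'] by metis
    qed
  qed
  then show ?thesis by (rule that)
qed

lemma qf_equiv_extend_independent:
  assumes qf: "qf_equiv \<sigma> \<tau> V" and "x \<notin> V"
    and indep_u: "independent \<sigma> V u" and indep_v: "independent \<tau> V v"
    and residues: "\<And>k j. cong_U k j v \<longleftrightarrow> cong_U k j u"
    and mult_P: "\<And>m a t. 1 \<le> m \<Longrightarrow> 1 \<le> a \<Longrightarrow> tvars t \<subseteq> V \<Longrightarrow>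
       in_mult_P m (a \<cdot> v \<oplus> tval U \<tau> t) \<longleftrightarrow> in_mult_P m (a \<cdot> u \<oplus> tval U \<sigma> t)"
  shows "qf_equiv (\<sigma>(x := u)) (\<tau>(x := v)) (insert x V)"
proof (rule qf_equivI)
  fix t assume "tvars t \<subseteq> insert x V"
  define a where "a = coeff x t"
  define t' where "t' = rest x t"
  have t': "tvars t' \<subseteq> V" using \<open>tvars t \<subseteq> insert x V\<close> by (auto simp: t'_def)
  have \<sigma>: "tval U (\<sigma>(x := u)) t = zmul a u \<oplus> tval U \<sigma> t'"
    using tval_U_coeff_rest[of "\<sigma>(x := u)" t x] by (simp add: a_def t'_def)
  have \<tau>: "tval U (\<tau>(x := v)) t = zmul a v \<oplus> tval U \<tau> t'"
    using tval_U_coeff_rest[of "\<tau>(x := v)" t x] by (simp add: a_def t'_def)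
  show "cong_U k j (tval U (\<sigma>(x := u)) t) \<longleftrightarrow> cong_U k j (tval U (\<tau>(x := v)) t)" for k j
    unfolding \<sigma> \<tau> using residues qf_equivD(1)[OF qf t'] by (intro cong_U_add_zmul) simp_all
  show "tval U (\<sigma>(x := u)) t = \<zero> \<longleftrightarrow> tval U (\<tau>(x := v)) t = \<zero>"
  proof (cases "a = 0")
    case True
    then show ?thesis unfolding \<sigma> \<tau> using qf_equivD(2)[OF qf t'] by simp
  next
    case False
    then show ?thesis
      unfolding \<sigma> \<tau> using independent_zmul_add_ne_0[OF indep_u False t']
        independent_zmul_add_ne_0[OF indep_v False t'] by simp
  qed
  fix m :: nat assume "1 \<le> m"
  show "in_mult_P m (tval U (\<sigma>(x := u)) t) \<longleftrightarrow> in_mult_P m (tval U (\<tau>(x := v)) t)"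
  proof (cases a "0::int" rule: linorder_cases)
    case equal
    then show ?thesis unfolding \<sigma> \<tau> using qf_equivD(3)[OF qf t' \<open>1 \<le> m\<close>] by simp
  next
    case greater
    then have "zmul a u = nat a \<cdot> u" "zmul a v = nat a \<cdot> v" "1 \<le> nat a"
      by (simp_all add: zmul_def)
    then show ?thesis unfolding \<sigma> \<tau> using mult_P[OF \<open>1 \<le> m\<close> _ t'] by simp
  next
    case less
    have "1 \<le> nat (- a)" "tvars (Neg t') \<subseteq> V" using t' less by simp_all
    then show ?thesis
      unfolding \<sigma> \<tau> in_mult_P_zmul_neg[OF less] using mult_P[OF \<open>1 \<le> m\<close>, of "nat (- a)" "Neg t'"]
      by auto
  qed
qed

definition mult_P_fm :: "nat \<Rightarrow> nat \<Rightarrow> fm"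
  where "mult_P_fm m a = Ex 2 (Conj (Eq (mulT m (Var 2)) (Add (mulT a (Var 0)) (Var 1))) (Pr (Var 2)))"

lemma sat_mult_P_fm: "sat U (mult_P_fm m a) \<rho> \<longleftrightarrow> in_mult_P m (a \<cdot> \<rho> 0 \<oplus> \<rho> 1)"
  by (auto simp: mult_P_fm_def in_mult_P_def)

lemma fv_mult_P_fm: "fv (mult_P_fm m a) \<subseteq> {0, 1}"
  by (auto simp: mult_P_fm_def split: if_splits)

lemma finitely_realise_independent_extension:
  fixes \<sigma>s \<tau>s :: "nat \<Rightarrow> nat \<Rightarrow> 'b" and Vs :: "nat \<Rightarrow> nat set" and I :: "nat set"
    and Cm :: "(nat \<times> nat \<times> nat \<times> tm) set"
  assumes qf: "\<And>i. i \<in> I \<Longrightarrow> qf_equiv (\<sigma>s i) (\<tau>s i) (Vs i)"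
    and indep: "\<And>i. i \<in> I \<Longrightarrow> independent (\<sigma>s i) (Vs i) u"
    and relations: "\<And>i i' t t' p q. i \<in> I \<Longrightarrow> i' \<in> I \<Longrightarrow> tvars t \<subseteq> Vs i \<Longrightarrow> tvars t' \<subseteq> Vs i' \<Longrightarrow>
      1 \<le> p \<Longrightarrow> 1 \<le> q \<Longrightarrow> p \<cdot> tval U (\<tau>s i) t = q \<cdot> tval U (\<tau>s i') t' \<Longrightarrow>
      p \<cdot> tval U (\<sigma>s i) t = q \<cdot> tval U (\<sigma>s i') t'"
    and "finite Ks" "\<And>k. k \<in> Ks \<Longrightarrow> 0 < k" "finite Y"
    and "finite Cm" and Cm: "\<And>i m a t. (i, m, a, t) \<in> Cm \<Longrightarrow> i \<in> I \<and> tvars t \<subseteq> Vs i \<and> 1 \<le> m \<and> 1 \<le> a"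
  obtains v where "\<And>k j. k \<in> Ks \<Longrightarrow> cong_U k j v \<longleftrightarrow> cong_U k j u" "v \<notin> Y"
    "\<And>i m a t. (i, m, a, t) \<in> Cm \<Longrightarrow>
      in_mult_P m (a \<cdot> v \<oplus> tval U (\<tau>s i) t) \<longleftrightarrow> in_mult_P m (a \<cdot> u \<oplus> tval U (\<sigma>s i) t)"
proof -
  let ?m = "\<lambda>(i::nat, m::nat, a::nat, t::tm). m" and ?a = "\<lambda>(i::nat, m::nat, a::nat, t::tm). a"
  let ?yt = "\<lambda>(i, m::nat, a::nat, t). tval U (\<tau>s i) t" and ?ys = "\<lambda>(i, m::nat, a::nat, t). tval U (\<sigma>s i) t"
  have ma: "1 \<le> ?m c \<and> 1 \<le> ?a c" if "c \<in> Cm" for c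
    using that Cm by (cases c) auto
  have res: "cong_U k j (?yt c) \<longleftrightarrow> cong_U k j (?ys c)" if "c \<in> Cm" for c k j
    using that Cm qf_equivD(1)[OF qf] by (cases c) auto
  have rel: "?m c' \<cdot> ?ys c = ?m c \<cdot> ?ys c'"
    if "c \<in> Cm" "c' \<in> Cm" "?m c' \<cdot> ?yt c = ?m c \<cdot> ?yt c'" for c c'
  proof -
    obtain i m a t i' m' a' t' where c: "c = (i, m, a, t)" and c': "c' = (i', m', a', t')"
      by (cases c, cases c')
    show ?thesis
      using that relations[of i i' t t' m' m] Cm[of i m a t] Cm[of i' m' a' t'] by (simp add: c c')
  qed
  have nonstandard: "?a c \<cdot> u \<oplus> ?ys c \<notin> range num" if "c \<in> Cm" for c
  proof -
    obtain i m a t where c: "c = (i, m, a, t)" by (cases c)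
    show ?thesis
      using that Cm[of i m a t] independent_add_U_nonstandard[OF indep[of i], of a t] by (simp add: c)
  qed
  obtain v where residues: "\<And>k j. k \<in> Ks \<Longrightarrow> cong_U k j v \<longleftrightarrow> cong_U k j u"
    and "v \<notin> Y"
    and v: "\<And>c. c \<in> Cm \<Longrightarrow>
      in_mult_P (?m c) (?a c \<cdot> v \<oplus> ?yt c) \<longleftrightarrow> in_mult_P (?m c) (?a c \<cdot> u \<oplus> ?ys c)"
    using realise_in_mult_P_conditions[where C = Cm and m = ?m and a = ?a and yt = ?yt and ys = ?ys,
        OF \<open>finite Cm\<close> \<open>finite Ks\<close> \<open>finite Y\<close> assms(5) ma res rel nonstandard] by blast
  show ?thesis
  proof (rule that[OF residues \<open>v \<notin> Y\<close>])
    fix i m a t assume "(i, m, a, t) \<in> Cm"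
    then show "in_mult_P m (a \<cdot> v \<oplus> tval U (\<tau>s i) t) \<longleftrightarrow> in_mult_P m (a \<cdot> u \<oplus> tval U (\<sigma>s i) t)"
      using v[of "(i, m, a, t)"] by simp
  qed
qed

text \<open>A pair \<open>(\<phi>, \<sigma>)\<close> stands for the formula \<open>\<phi>\<close> in the variable \<open>0\<close> with the parameters \<open>\<sigma>\<close>;
  the value of \<open>\<sigma>\<close> at \<open>0\<close> is irrelevant.\<close>

definition holds :: "fm \<times> (nat \<Rightarrow> 'b) \<Rightarrow> 'b \<Rightarrow> bool"
  where "holds = (\<lambda>(\<phi>, \<sigma>) c. sat U \<phi> (\<sigma>(0 := c)))"

definition cong_cond :: "nat \<times> nat \<Rightarrow> fm \<times> (nat \<Rightarrow> 'b)"
  where "cong_cond = (\<lambda>(k, j). (Cong k j (Var 0), \<lambda>_. \<zero>))"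

definition avoid_cond :: "nat \<times> 'b \<Rightarrow> fm \<times> (nat \<Rightarrow> 'b)"
  where "avoid_cond = (\<lambda>(p, y). (Not (Eq (mulT p (Var 0)) (Var 1)), (\<lambda>_. \<zero>)(1 := y)))"

definition mult_cond ::
  "(nat \<Rightarrow> nat \<Rightarrow> 'b) \<Rightarrow> (nat \<Rightarrow> nat \<Rightarrow> 'b) \<Rightarrow> 'b \<Rightarrow> nat \<times> nat \<times> nat \<times> tm \<Rightarrow> fm \<times> (nat \<Rightarrow> 'b)"
  where "mult_cond \<sigma>s \<tau>s u = (\<lambda>(i, m, a, t).
    (if in_mult_P m (a \<cdot> u \<oplus> tval U (\<sigma>s i) t) then mult_P_fm m a else Not (mult_P_fm m a),
     (\<lambda>_. \<zero>)(1 := tval U (\<tau>s i) t)))"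

lemma holds_Pair [simp]: "holds (\<phi>, \<sigma>) c \<longleftrightarrow> sat U \<phi> (\<sigma>(0 := c))"
  by (simp add: holds_def)

lemma holds_cong_cond [simp]: "holds (cong_cond (k, j)) c \<longleftrightarrow> cong_U k j c"
  by (simp add: holds_def cong_cond_def)

lemma holds_avoid_cond [simp]: "holds (avoid_cond (p, y)) c \<longleftrightarrow> p \<cdot> c \<noteq> y"
  by (simp add: holds_def avoid_cond_def)

lemma holds_mult_cond [simp]: "holds (mult_cond \<sigma>s \<tau>s u (i, m, a, t)) c \<longleftrightarrow>
    (in_mult_P m (a \<cdot> c \<oplus> tval U (\<tau>s i) t) \<longleftrightarrow> in_mult_P m (a \<cdot> u \<oplus> tval U (\<sigma>s i) t))"
  by (simp add: holds_def mult_cond_def sat_mult_P_fm)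

text \<open>The type over the valuations \<open>\<tau>s i\<close> that an element \<open>v\<close> matching \<open>u\<close> (over the
  valuations \<open>\<sigma>s i\<close>) has to realise.\<close>

definition extension_type ::
  "nat set \<Rightarrow> (nat \<Rightarrow> nat set) \<Rightarrow> (nat \<Rightarrow> nat \<Rightarrow> 'b) \<Rightarrow> (nat \<Rightarrow> nat \<Rightarrow> 'b) \<Rightarrow> 'b \<Rightarrow>
    (fm \<times> (nat \<Rightarrow> 'b)) set"
  where "extension_type I Vs \<sigma>s \<tau>s u =
    cong_cond ` {(k, j). cong_U k j u} \<union>
    avoid_cond ` ({p. 1 \<le> p} \<times> (\<lambda>(i, t). tval U (\<tau>s i) t) ` (I \<times> UNIV)) \<union>
    mult_cond \<sigma>s \<tau>s u ` {(i, m, a, t). i \<in> I \<and> tvars t \<subseteq> Vs i \<and> 1 \<le> m \<and> 1 \<le> a}"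

lemma extension_type_params:
  assumes "(\<phi>, \<sigma>) \<in> extension_type I Vs \<sigma>s \<tau>s u" "x \<in> fv \<phi>" "x \<noteq> 0"
  shows "\<sigma> x \<in> (\<lambda>(i, t). tval U (\<tau>s i) t) ` (I \<times> UNIV)"
proof -
  consider (cong) k j where "(\<phi>, \<sigma>) = cong_cond (k, j)"
    | (avoid) p i t where "i \<in> I" "(\<phi>, \<sigma>) = avoid_cond (p, tval U (\<tau>s i) t)"
    | (mult) i m a t where "i \<in> I" "(\<phi>, \<sigma>) = mult_cond \<sigma>s \<tau>s u (i, m, a, t)"
    using assms(1) unfolding extension_type_def by (auto simp: image_iff)
  then show ?thesis
  proof cases
    case cong
    then show ?thesis using assms(2,3) by (simp add: cong_cond_def)
  next
    case avoid
    then show ?thesis using assms(2,3)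
      by (auto simp: avoid_cond_def split: if_splits intro!: image_eqI[of _ _ "(i, t)"])
  next
    case mult
    then have "x = 1" using assms(2,3) fv_mult_P_fm by (auto simp: mult_cond_def split: if_splits)
    then show ?thesis using mult by (auto simp: mult_cond_def intro!: image_eqI[of _ _ "(i, t)"])
  qed
qed

lemma extension_type_finitely_satisfiable:
  fixes \<sigma>s \<tau>s :: "nat \<Rightarrow> nat \<Rightarrow> 'b" and Vs :: "nat \<Rightarrow> nat set" and I :: "nat set"
  assumes qf: "\<And>i. i \<in> I \<Longrightarrow> qf_equiv (\<sigma>s i) (\<tau>s i) (Vs i)"
    and indep: "\<And>i. i \<in> I \<Longrightarrow> independent (\<sigma>s i) (Vs i) u"
    and relations: "\<And>i i' t t' p q. i \<in> I \<Longrightarrow> i' \<in> I \<Longrightarrow> tvars t \<subseteq> Vs i \<Longrightarrow> tvars t' \<subseteq> Vs i' \<Longrightarrow>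
      1 \<le> p \<Longrightarrow> 1 \<le> q \<Longrightarrow> p \<cdot> tval U (\<tau>s i) t = q \<cdot> tval U (\<tau>s i') t' \<Longrightarrow>
      p \<cdot> tval U (\<sigma>s i) t = q \<cdot> tval U (\<sigma>s i') t'"
    and "F \<subseteq> extension_type I Vs \<sigma>s \<tau>s u" "finite F"
  shows "\<exists>c. \<forall>x\<in>F. holds x c"
proof -
  obtain Cc Ca Cm where "Cc \<subseteq> {(k, j). cong_U k j u}" "finite Cc"
    and "Ca \<subseteq> {p. 1 \<le> p} \<times> (\<lambda>(i, t). tval U (\<tau>s i) t) ` (I \<times> UNIV)" "finite Ca"
    and "Cm \<subseteq> {(i, m, a, t). i \<in> I \<and> tvars t \<subseteq> Vs i \<and> 1 \<le> m \<and> 1 \<le> a}" "finite Cm"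
    and F: "F \<subseteq> cong_cond ` Cc \<union> avoid_cond ` Ca \<union> mult_cond \<sigma>s \<tau>s u ` Cm"
    by (rule finite_subset_image_Un3[OF \<open>finite F\<close> \<open>F \<subseteq> extension_type I Vs \<sigma>s \<tau>s u\<close>
          [unfolded extension_type_def]]) (rule that)
  define Y where "Y = (\<Union>(p, y)\<in>Ca. nmul p -` {y})"
  have "finite Y"
    unfolding Y_def using \<open>finite Ca\<close> \<open>Ca \<subseteq> _\<close> inj_nmul
    by (intro finite_UN_I) (auto intro!: finite_vimageI)
  have Ks: "finite (fst ` Cc)" "\<And>k. k \<in> fst ` Cc \<Longrightarrow> 0 < k"
    using \<open>finite Cc\<close> \<open>Cc \<subseteq> _\<close> cong_U_range by auto
  have Cm: "\<And>i m a t. (i, m, a, t) \<in> Cm \<Longrightarrow> i \<in> I \<and> tvars t \<subseteq> Vs i \<and> 1 \<le> m \<and> 1 \<le> a"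
    using \<open>Cm \<subseteq> _\<close> by auto
  obtain c where c_cong: "\<And>k j. k \<in> fst ` Cc \<Longrightarrow> cong_U k j c \<longleftrightarrow> cong_U k j u"
    and "c \<notin> Y" and c_mult: "\<And>i m a t. (i, m, a, t) \<in> Cm \<Longrightarrow>
      in_mult_P m (a \<cdot> c \<oplus> tval U (\<tau>s i) t) \<longleftrightarrow> in_mult_P m (a \<cdot> u \<oplus> tval U (\<sigma>s i) t)"
    using finitely_realise_independent_extension[where Ks = "fst ` Cc" and Y = Y and Cm = Cm,
        OF qf indep relations Ks \<open>finite Y\<close> \<open>finite Cm\<close> Cm] by blast
  have "holds x c" if x: "x \<in> F" for x
  proof -
    consider (cong) k j where "(k, j) \<in> Cc" "x = cong_cond (k, j)"
      | (avoid) p y where "(p, y) \<in> Ca" "x = avoid_cond (p, y)"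
      | (mult) i m a t where "(i, m, a, t) \<in> Cm" "x = mult_cond \<sigma>s \<tau>s u (i, m, a, t)"
      using subsetD[OF F x] by (auto simp: image_iff)
    then show ?thesis
    proof cases
      case cong
      then show ?thesis using c_cong[of k j] \<open>Cc \<subseteq> _\<close> by force
    next
      case avoid
      then show ?thesis using \<open>c \<notin> Y\<close> by (force simp: Y_def)
    next
      case mult
      then show ?thesis using c_mult by simp
    qed
  qed
  then show ?thesis by blast
qed

end

locale saturated_random_Z_model = random_Z_model +
  fixes B :: "'b set"
  assumes saturated: "saturated_for U B"
begin

lemma realise_type:
  assumes "countable A" and params: "\<And>\<phi> \<sigma> v. (\<phi>, \<sigma>) \<in> \<Sigma> \<Longrightarrow> v \<in> fv \<phi> \<Longrightarrow> v \<noteq> 0 \<Longrightarrow> \<sigma> v \<in> A"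
    and fin: "\<And>F. F \<subseteq> \<Sigma> \<Longrightarrow> finite F \<Longrightarrow> \<exists>c. \<forall>x\<in>F. holds x c"
  obtains c where "\<And>x. x \<in> \<Sigma> \<Longrightarrow> holds x c"
proof -
  have holds_iff: "(\<forall>(\<phi>, \<sigma>)\<in>F. sat U \<phi> (\<sigma>(0 := c))) \<longleftrightarrow> (\<forall>x\<in>F. holds x c)" for F c
    by (auto simp: holds_def)
  have "small_wrt A B"
    unfolding small_wrt_def using \<open>countable A\<close>
    by (intro exI[of _ "Inr \<circ> to_nat_on A"]) (auto intro!: comp_inj_on inj_on_to_nat_on)
  moreover have "\<forall>(\<phi>, \<sigma>)\<in>\<Sigma>. \<forall>v\<in>fv \<phi> - {0}. \<sigma> v \<in> A"
    using params by blast
  moreover have "\<forall>F\<subseteq>\<Sigma>. finite F \<longrightarrow> (\<exists>c. \<forall>(\<phi>, \<sigma>)\<in>F. sat U \<phi> (\<sigma>(0 := c)))"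
    using fin by (simp add: holds_iff)
  ultimately have "\<exists>c. \<forall>(\<phi>, \<sigma>)\<in>\<Sigma>. sat U \<phi> (\<sigma>(0 := c))"
    using saturated unfolding saturated_for_def by blast
  then obtain c where c: "\<forall>x\<in>\<Sigma>. holds x c"
    by (auto simp: holds_iff)
  show ?thesis
  proof (rule that)
    fix x assume "x \<in> \<Sigma>"
    then show "holds x c" using c by blast
  qed
qed

lemma realise_independent_extension:
  fixes \<sigma>s \<tau>s :: "nat \<Rightarrow> nat \<Rightarrow> 'b" and Vs :: "nat \<Rightarrow> nat set" and I :: "nat set"
  assumes qf: "\<And>i. i \<in> I \<Longrightarrow> qf_equiv (\<sigma>s i) (\<tau>s i) (Vs i)"
    and indep: "\<And>i. i \<in> I \<Longrightarrow> independent (\<sigma>s i) (Vs i) u"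
    and relations: "\<And>i i' t t' p q. i \<in> I \<Longrightarrow> i' \<in> I \<Longrightarrow> tvars t \<subseteq> Vs i \<Longrightarrow> tvars t' \<subseteq> Vs i' \<Longrightarrow>
      1 \<le> p \<Longrightarrow> 1 \<le> q \<Longrightarrow> p \<cdot> tval U (\<tau>s i) t = q \<cdot> tval U (\<tau>s i') t' \<Longrightarrow>
      p \<cdot> tval U (\<sigma>s i) t = q \<cdot> tval U (\<sigma>s i') t'"
  obtains v where "\<And>k j. cong_U k j v \<longleftrightarrow> cong_U k j u"
    and "\<And>i. i \<in> I \<Longrightarrow> independent (\<tau>s i) (Vs i) v"
    and "\<And>i m a t. i \<in> I \<Longrightarrow> tvars t \<subseteq> Vs i \<Longrightarrow> 1 \<le> m \<Longrightarrow> 1 \<le> a \<Longrightarrow>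
      in_mult_P m (a \<cdot> v \<oplus> tval U (\<tau>s i) t) \<longleftrightarrow> in_mult_P m (a \<cdot> u \<oplus> tval U (\<sigma>s i) t)"
proof -
  let ?\<Sigma> = "extension_type I Vs \<sigma>s \<tau>s u"
  have "countable ((\<lambda>(i, t). tval U (\<tau>s i) t) ` (I \<times> UNIV))"
    by (intro countable_image countable_SIGMA) auto
  then obtain v where v: "\<And>x. x \<in> ?\<Sigma> \<Longrightarrow> holds x v"
  proof (rule realise_type)
    show "\<sigma> x \<in> (\<lambda>(i, t). tval U (\<tau>s i) t) ` (I \<times> UNIV)"
      if "(\<phi>, \<sigma>) \<in> ?\<Sigma>" "x \<in> fv \<phi>" "x \<noteq> 0" for \<phi> \<sigma> x
      using extension_type_params[OF that] .
    show "\<exists>c. \<forall>x\<in>F. holds x c" if "F \<subseteq> ?\<Sigma>" "finite F" for F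
      using extension_type_finitely_satisfiable[OF qf indep relations that] .
  next
    fix c assume "\<And>x. x \<in> ?\<Sigma> \<Longrightarrow> holds x c"
    then show thesis by (rule that)
  qed
  have cong: "cong_U k j v" if "cong_U k j u" for k j
  proof -
    have "cong_cond (k, j) \<in> ?\<Sigma>"
      unfolding extension_type_def using that by (intro UnI1 imageI) simp
    then show ?thesis using v by fastforce
  qed
  have "cong_U k j v \<longleftrightarrow> cong_U k j u" for k j
  proof
    assume "cong_U k j v"
    moreover obtain r where "cong_U k r u"
      using \<open>cong_U k j v\<close> cong_U_exists cong_U_range by metis
    ultimately show "cong_U k j u" using cong cong_U_unique by metis
  qed (rule cong)
  moreover have "independent (\<tau>s i) (Vs i) v" if "i \<in> I" for i
    unfolding independent_def
  proof (intro allI impI)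
    fix m :: nat and t assume "1 \<le> m" "tvars t \<subseteq> Vs i"
    have "avoid_cond (m, tval U (\<tau>s i) t) \<in> ?\<Sigma>"
      unfolding extension_type_def using \<open>1 \<le> m\<close> \<open>i \<in> I\<close>
      by (intro UnI1 UnI2 imageI) (auto intro: image_eqI[of _ _ "(i, t)"])
    then show "m \<cdot> v \<noteq> tval U (\<tau>s i) t" using v by fastforce
  qed
  moreover have "in_mult_P m (a \<cdot> v \<oplus> tval U (\<tau>s i) t) \<longleftrightarrow> in_mult_P m (a \<cdot> u \<oplus> tval U (\<sigma>s i) t)"
    if "i \<in> I" "tvars t \<subseteq> Vs i" "1 \<le> m" "1 \<le> a" for i m a t
  proof -
    have "mult_cond \<sigma>s \<tau>s u (i, m, a, t) \<in> ?\<Sigma>"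
      unfolding extension_type_def using that by (intro UnI2 imageI) simp
    then show ?thesis using v by fastforce
  qed
  ultimately show ?thesis using that by blast
qed

lemma qf_equiv_extend:
  assumes qf: "qf_equiv \<sigma> \<tau> V" and "x \<notin> V"
  obtains v where "qf_equiv (\<sigma>(x := u)) (\<tau>(x := v)) (insert x V)"
proof (cases "independent \<sigma> V u")
  case False
  then obtain m t where "1 \<le> m" "tvars t \<subseteq> V" "m \<cdot> u = tval U \<sigma> t"
    unfolding independent_def by blast
  then show ?thesis
    using qf_equiv_extend_dependent[OF qf \<open>x \<notin> V\<close>] that by metis
next
  case True
  have relations: "p \<cdot> tval U \<sigma> t = q \<cdot> tval U \<sigma> t'"
    if "tvars t \<subseteq> V" "tvars t' \<subseteq> V" "p \<cdot> tval U \<tau> t = q \<cdot> tval U \<tau> t'" for t t' p q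
  proof -
    have "tvars (Add (mulT p t) (Neg (mulT q t'))) \<subseteq> V" using that by auto
    moreover have "tval U \<tau> (Add (mulT p t) (Neg (mulT q t'))) = \<zero>"
      using that(3) by simp
    ultimately have "tval U \<sigma> (Add (mulT p t) (Neg (mulT q t'))) = \<zero>"
      using qf_equivD(2)[OF qf] by blast
    then show ?thesis by simp
  qed
  have qf0: "\<And>i. i \<in> {0::nat} \<Longrightarrow> qf_equiv \<sigma> \<tau> V"
    and indep0: "\<And>i. i \<in> {0::nat} \<Longrightarrow> independent \<sigma> V u"
    using qf True by simp_all
  have relations0: "\<And>i i' t t' p q. i \<in> {0::nat} \<Longrightarrow> i' \<in> {0} \<Longrightarrow> tvars t \<subseteq> V \<Longrightarrow>
      tvars t' \<subseteq> V \<Longrightarrow> 1 \<le> p \<Longrightarrow> 1 \<le> q \<Longrightarrow> p \<cdot> tval U \<tau> t = q \<cdot> tval U \<tau> t' \<Longrightarrow>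
      p \<cdot> tval U \<sigma> t = q \<cdot> tval U \<sigma> t'"
    by (rule relations)
  show ?thesis
  proof (rule realise_independent_extension[where I = "{0}" and \<sigma>s = "\<lambda>_. \<sigma>" and \<tau>s = "\<lambda>_. \<tau>"
        and Vs = "\<lambda>_. V", OF qf0 indep0 relations0])
    fix v assume "\<And>k j. cong_U k j v \<longleftrightarrow> cong_U k j u"
      and "\<And>i. i \<in> {0::nat} \<Longrightarrow> independent \<tau> V v"
      and "\<And>i m a t. i \<in> {0::nat} \<Longrightarrow> tvars t \<subseteq> V \<Longrightarrow> 1 \<le> m \<Longrightarrow> 1 \<le> a \<Longrightarrow>
        in_mult_P m (a \<cdot> v \<oplus> tval U \<tau> t) \<longleftrightarrow> in_mult_P m (a \<cdot> u \<oplus> tval U \<sigma> t)"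
    then have "qf_equiv (\<sigma>(x := u)) (\<tau>(x := v)) (insert x V)"
      by (intro qf_equiv_extend_independent[OF qf \<open>x \<notin> V\<close> True]) simp_all
    then show ?thesis by (rule that)
  qed
qed

lemma sat_iff_if_qf_equiv: "qf_equiv \<sigma> \<tau> V \<Longrightarrow> fv \<phi> \<subseteq> V \<Longrightarrow> sat U \<phi> \<sigma> \<longleftrightarrow> sat U \<phi> \<tau>"
proof (induction \<phi> arbitrary: \<sigma> \<tau> V)
  case (Eq s t)
  then have "tvars (Add s (Neg t)) \<subseteq> V" by simp
  then have "tval U \<sigma> (Add s (Neg t)) = \<zero> \<longleftrightarrow> tval U \<tau> (Add s (Neg t)) = \<zero>"
    using qf_equivD(2)[OF Eq(1)] by blast
  then show ?case by simp
next
  case (Cong k j t)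
  then show ?case using qf_equivD(1)[OF Cong(1)] by simp
next
  case (Pr t)
  have "in_mult_P 1 (tval U \<sigma> t) \<longleftrightarrow> in_mult_P 1 (tval U \<tau> t)"
    by (rule qf_equivD(3)[OF Pr(1)]) (use Pr(2) in simp_all)
  then show ?case unfolding in_mult_P_1 by simp
next
  case Bot
  then show ?case by simp
next
  case (Not p)
  have "sat U p \<sigma> \<longleftrightarrow> sat U p \<tau>" by (rule Not.IH) (use Not.prems in auto)
  then show ?case by simp
next
  case (Conj p q)
  have "sat U p \<sigma> \<longleftrightarrow> sat U p \<tau>" by (rule Conj.IH(1)) (use Conj.prems in auto)
  moreover have "sat U q \<sigma> \<longleftrightarrow> sat U q \<tau>" by (rule Conj.IH(2)) (use Conj.prems in auto)
  ultimately show ?case by simp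
next
  case (Ex x p)
  have qf': "qf_equiv \<sigma> \<tau> (V - {x})" using qf_equiv_mono[OF Ex.prems(1)] by blast
  have fv: "fv p \<subseteq> insert x (V - {x})" using Ex.prems(2) by auto
  show ?case
  proof
    assume "sat U (Ex x p) \<sigma>"
    then obtain a where a: "sat U p (\<sigma>(x := a))" by auto
    obtain b where "qf_equiv (\<sigma>(x := a)) (\<tau>(x := b)) (insert x (V - {x}))"
      using qf_equiv_extend[OF qf'] by blast
    then have "sat U p (\<tau>(x := b))" using Ex.IH[OF _ fv] a by blast
    then show "sat U (Ex x p) \<tau>" by auto
  next
    assume "sat U (Ex x p) \<tau>"
    then obtain b where b: "sat U p (\<tau>(x := b))" by auto
    obtain a where "qf_equiv (\<tau>(x := b)) (\<sigma>(x := a)) (insert x (V - {x}))"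
      using qf_equiv_extend[OF qf_equiv_sym[OF qf']] by blast
    then have "sat U p (\<sigma>(x := a))" using Ex.IH[OF qf_equiv_sym fv] b by blast
    then show "sat U (Ex x p) \<sigma>" by auto
  qed
qed

end

section \<open>Indiscernible sequences\<close>

lemma tup_upd_0 [simp]: "(tup as a)(0 := c) = tup as c"
  by (auto simp: tup_def fun_eq_iff)

lemma tval_tup:
  "tvars t \<subseteq> {1..length as} \<Longrightarrow> tval S (tup as c) t = tval S ((!) as) (mapvars (\<lambda>v. v - 1) t)"
  unfolding tval_mapvars by (rule tval_cong) (auto simp: tup_def)

lemma indiscernible_length: "indiscernible U B l s \<Longrightarrow> length (s i) = l"
  by (simp add: indiscernible_def)

lemma indiscernibleD:
  assumes "indiscernible U B l s" "strict_mono_on {..<n} f" "strict_mono_on {..<n} g"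
    and "\<forall>v\<in>fv \<psi>. n * l \<le> v \<longrightarrow> \<beta> v \<in> B"
  shows "sat U \<psi> (seq_asg l n f s \<beta>) \<longleftrightarrow> sat U \<psi> (seq_asg l n g s \<beta>)"
  using assms unfolding indiscernible_def by blast

lemma indiscernible_sat_iff:
  assumes "indiscernible U B l s" "fv \<psi> \<subseteq> {..<l}"
  shows "sat U \<psi> ((!) (s i)) \<longleftrightarrow> sat U \<psi> ((!) (s j))"
proof -
  let ?\<beta> = "\<lambda>_. s 0 ! 0"
  have "sat U \<psi> (seq_asg l 1 (\<lambda>_. i) s ?\<beta>) \<longleftrightarrow> sat U \<psi> (seq_asg l 1 (\<lambda>_. j) s ?\<beta>)"
    by (rule indiscernibleD[OF assms(1)]) (use assms(2) in \<open>auto simp: strict_mono_on_def\<close>)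
  moreover have "sat U \<psi> (seq_asg l 1 (\<lambda>_. k) s ?\<beta>) \<longleftrightarrow> sat U \<psi> ((!) (s k))" for k
    by (rule sat_cong) (use assms(2) in \<open>auto simp: seq_asg_def\<close>)
  ultimately show ?thesis by simp
qed

lemma indiscernible_eq_iff:
  assumes "indiscernible U B l s" "tvars \<alpha> \<subseteq> {..<l}" "tvars \<beta> \<subseteq> {..<l}" "i < j" "i' < j'"
  shows "tval U ((!) (s i)) \<alpha> = tval U ((!) (s j)) \<beta> \<longleftrightarrow>
    tval U ((!) (s i')) \<alpha> = tval U ((!) (s j')) \<beta>"
proof -
  let ?\<psi> = "Eq \<alpha> (mapvars (\<lambda>v. v + l) \<beta>)" and ?\<beta>0 = "\<lambda>_. s 0 ! 0"
  let ?f = "\<lambda>a b (k :: nat). if k = 0 then a else b"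
  have sat_\<psi>: "sat U ?\<psi> (seq_asg l 2 (?f a b) s ?\<beta>0) \<longleftrightarrow>
      tval U ((!) (s a)) \<alpha> = tval U ((!) (s b)) \<beta>" for a b
  proof -
    have "tval U (seq_asg l 2 (?f a b) s ?\<beta>0) \<alpha> = tval U ((!) (s a)) \<alpha>"
      by (rule tval_cong) (use assms(2) in \<open>auto simp: seq_asg_def\<close>)
    moreover have "tval U (seq_asg l 2 (?f a b) s ?\<beta>0) (mapvars (\<lambda>v. v + l) \<beta>) = tval U ((!) (s b)) \<beta>"
      unfolding tval_mapvars by (rule tval_cong) (use assms(3) in \<open>auto simp: seq_asg_def\<close>)
    ultimately show ?thesis by simp
  qed
  have mono: "strict_mono_on {..<2} (?f a b)" if "a < b" for a b :: nat
    using that by (auto simp: strict_mono_on_def)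
  have "sat U ?\<psi> (seq_asg l 2 (?f i j) s ?\<beta>0) \<longleftrightarrow> sat U ?\<psi> (seq_asg l 2 (?f i' j') s ?\<beta>0)"
    by (rule indiscernibleD[OF assms(1) mono[OF assms(4)] mono[OF assms(5)]])
      (use assms(2,3) in auto)
  then show ?thesis unfolding sat_\<psi> .
qed

lemma indiscernible_eq_at_0:
  assumes "indiscernible U B l s" "tvars \<alpha> \<subseteq> {..<l}" "tvars \<beta> \<subseteq> {..<l}" "i < j"
    and "tval U ((!) (s i)) \<alpha> = tval U ((!) (s j)) \<beta>"
  shows "tval U ((!) (s 0)) \<alpha> = tval U ((!) (s 0)) \<beta>"
proof -
  have "tval U ((!) (s 0)) \<alpha> = tval U ((!) (s 1)) \<beta>" "tval U ((!) (s 0)) \<alpha> = tval U ((!) (s 2)) \<beta>"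
    using indiscernible_eq_iff[OF assms(1-4)] assms(5) by simp_all
  moreover from this have "tval U ((!) (s 0)) \<beta> = tval U ((!) (s 1)) \<beta>"
    using indiscernible_eq_iff[OF assms(1) assms(3) assms(3), of 1 2 0 1] by simp
  ultimately show ?thesis by simp
qed

lemma indiscernible_eq_imp_eq_at_0:
  assumes "indiscernible U B l s" "tvars \<alpha> \<subseteq> {..<l}" "tvars \<beta> \<subseteq> {..<l}"
    and "tval U ((!) (s i)) \<alpha> = tval U ((!) (s j)) \<beta>"
  shows "tval U ((!) (s 0)) \<alpha> = tval U ((!) (s 0)) \<beta>"
proof (cases i j rule: linorder_cases)
  case less
  then show ?thesis using indiscernible_eq_at_0[OF assms(1-3)] assms(4) by blast
next
  case equal
  then show ?thesis
    using indiscernible_sat_iff[OF assms(1), of "Eq \<alpha> \<beta>" i 0] assms(2-4) by auto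
next
  case greater
  then show ?thesis using indiscernible_eq_at_0[OF assms(1,3,2)] assms(4) by fastforce
qed

context random_Z_model
begin

lemma qf_equiv_tup:
  assumes ind: "indiscernible U B (length as) s" and "s 0 = as"
  shows "qf_equiv (tup as a) (tup (s n) b) {1..length as}"
proof (rule qf_equivI)
  let ?l = "length as"
  fix t assume t: "tvars t \<subseteq> {1..?l}"
  define t' where "t' = mapvars (\<lambda>v. v - 1) t"
  have t': "tvars t' \<subseteq> {..<?l}" unfolding t'_def by (rule tvars_mapvars_pred[OF t])
  have as: "tval U (tup as a) t = tval U ((!) (s 0)) t'"
    using tval_tup[OF t] \<open>s 0 = as\<close> by (simp add: t'_def)
  have sn: "tval U (tup (s n) b) t = tval U ((!) (s n)) t'"
    using tval_tup[of t "s n"] t indiscernible_length[OF ind] by (simp add: t'_def)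
  show "cong_U k j (tval U (tup as a) t) \<longleftrightarrow> cong_U k j (tval U (tup (s n) b) t)" for k j
    using indiscernible_sat_iff[OF ind, of "Cong k j t'" 0 n] t' by (simp add: as sn)
  show "tval U (tup as a) t = \<zero> \<longleftrightarrow> tval U (tup (s n) b) t = \<zero>"
    using indiscernible_sat_iff[OF ind, of "Eq t' Zero" 0 n] t' by (simp add: as sn)
  fix m :: nat
  let ?\<psi> = "Ex ?l (Conj (Eq (mulT m (Var ?l)) t') (Pr (Var ?l)))"
  have "?l \<notin> tvars t'" using t' by auto
  then have "sat U ?\<psi> ((!) (s i)) \<longleftrightarrow> in_mult_P m (tval U ((!) (s i)) t')" for i
    by (auto simp: in_mult_P_def)
  moreover have "fv ?\<psi> \<subseteq> {..<?l}" using t' by auto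
  ultimately show "in_mult_P m (tval U (tup as a) t) \<longleftrightarrow> in_mult_P m (tval U (tup (s n) b) t)"
    using indiscernible_sat_iff[OF ind, of ?\<psi> 0 n] by (simp add: as sn)
qed

lemma tup_relations:
  assumes ind: "indiscernible U B (length as) s" and "s 0 = as"
    and t: "tvars t \<subseteq> {1..length as}" and t': "tvars t' \<subseteq> {1..length as}"
    and "p \<cdot> tval U (tup (s n) a) t = q \<cdot> tval U (tup (s n') b) t'"
  shows "p \<cdot> tval U (tup as c) t = q \<cdot> tval U (tup as d) t'"
proof -
  define \<alpha> where "\<alpha> = mulT p (mapvars (\<lambda>v. v - 1) t)"
  define \<beta> where "\<beta> = mulT q (mapvars (\<lambda>v. v - 1) t')"
  have \<alpha>: "tvars \<alpha> \<subseteq> {..<length as}" unfolding \<alpha>_def using tvars_mapvars_pred[OF t] by auto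
  have \<beta>: "tvars \<beta> \<subseteq> {..<length as}" unfolding \<beta>_def using tvars_mapvars_pred[OF t'] by auto
  have \<alpha>_tup: "p \<cdot> tval U (tup (s i) x) t = tval U ((!) (s i)) \<alpha>" for i x
    using tval_tup[of t "s i"] t indiscernible_length[OF ind] by (simp add: \<alpha>_def)
  have \<beta>_tup: "q \<cdot> tval U (tup (s i) x) t' = tval U ((!) (s i)) \<beta>" for i x
    using tval_tup[of t' "s i"] t' indiscernible_length[OF ind] by (simp add: \<beta>_def)
  have "tval U ((!) (s 0)) \<alpha> = tval U ((!) (s 0)) \<beta>"
    using indiscernible_eq_imp_eq_at_0[OF ind \<alpha> \<beta>] assms(5) \<alpha>_tup \<beta>_tup by metis
  then show ?thesis using \<alpha>_tup[of 0 c] \<beta>_tup[of 0 d] \<open>s 0 = as\<close> by simp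
qed

end

context saturated_random_Z_model
begin

lemma independent_realisation_exists:
  assumes fv: "fv \<phi> \<subseteq> {..length as}" and inf: "infinite {c. sat U \<phi> (tup as c)}"
  obtains c where "sat U \<phi> (tup as c)" "independent (tup as \<zero>) {1..length as} c"
proof -
  define A where "A = range (tval U (tup as \<zero>))"
  define \<Sigma> where "\<Sigma> = insert (\<phi>, tup as \<zero>) (avoid_cond ` ({p. 1 \<le> p} \<times> A))"
  have "countable (A \<union> set as)" by (simp add: A_def countable_finite)
  then obtain c where c: "\<And>x. x \<in> \<Sigma> \<Longrightarrow> holds x c"
  proof (rule realise_type)
    show "\<sigma> v \<in> A \<union> set as" if "(\<psi>, \<sigma>) \<in> \<Sigma>" "v \<in> fv \<psi>" "v \<noteq> 0" for \<psi> \<sigma> v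
      using that fv by (auto simp: \<Sigma>_def avoid_cond_def tup_def split: if_splits)
    show "\<exists>c. \<forall>x\<in>F. holds x c" if "F \<subseteq> \<Sigma>" "finite F" for F
    proof -
      have "finite (F - {(\<phi>, tup as \<zero>)})" "F - {(\<phi>, tup as \<zero>)} \<subseteq> avoid_cond ` ({p. 1 \<le> p} \<times> A)"
        using that by (auto simp: \<Sigma>_def)
      then obtain Ca where "Ca \<subseteq> {p. 1 \<le> p} \<times> A" "finite Ca"
        and Ca: "F - {(\<phi>, tup as \<zero>)} = avoid_cond ` Ca"
        by (meson finite_subset_image)
      have F: "F \<subseteq> insert (\<phi>, tup as \<zero>) (avoid_cond ` Ca)"
        unfolding Ca[symmetric] by (rule subset_insert_iff[THEN iffD2]) simp
      define Y where "Y = (\<Union>(p, y)\<in>Ca. nmul p -` {y})"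
      have "finite Y"
        unfolding Y_def using \<open>finite Ca\<close> \<open>Ca \<subseteq> _\<close> inj_nmul
        by (intro finite_UN_I) (auto intro!: finite_vimageI)
      then have "infinite ({c. sat U \<phi> (tup as c)} - Y)"
        using inf by (simp add: Diff_infinite_finite)
      then obtain c where "sat U \<phi> (tup as c)" "c \<notin> Y"
        using infinite_imp_nonempty by blast
      then have "holds x c" if "x \<in> F" for x
        using subsetD[OF F that] by (auto simp: Y_def)
      then show ?thesis by blast
    qed
  next
    fix c assume "\<And>x. x \<in> \<Sigma> \<Longrightarrow> holds x c"
    then show thesis by (rule that)
  qed
  have "sat U \<phi> (tup as c)"
    using c[of "(\<phi>, tup as \<zero>)"] by (simp add: \<Sigma>_def)
  moreover have "independent (tup as \<zero>) {1..length as} c"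
    unfolding independent_def
  proof (intro allI impI)
    fix m :: nat and t assume "1 \<le> m"
    then have "avoid_cond (m, tval U (tup as \<zero>) t) \<in> \<Sigma>" by (simp add: \<Sigma>_def A_def)
    then show "m \<cdot> c \<noteq> tval U (tup as \<zero>) t" using c by fastforce
  qed
  ultimately show ?thesis by (rule that)
qed

lemma common_realisation:
  assumes ind: "indiscernible U B (length as) s" and "s 0 = as"
    and fv: "fv \<phi> \<subseteq> {..length as}" and inf: "infinite {c. sat U \<phi> (tup as c)}"
  obtains v where "\<And>n. sat U \<phi> (tup (s n) v)"
proof -
  let ?V = "{1..length as}"
  obtain c where c: "sat U \<phi> (tup as c)" and indep: "independent (tup as \<zero>) ?V c"
    using independent_realisation_exists[OF fv inf] by blast
  have qf: "qf_equiv (tup as \<zero>) (tup (s n) \<zero>) ?V" for n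
    by (rule qf_equiv_tup[OF ind \<open>s 0 = as\<close>])
  show ?thesis
  proof (rule realise_independent_extension[where I = UNIV and \<sigma>s = "\<lambda>_. tup as \<zero>"
        and \<tau>s = "\<lambda>n. tup (s n) \<zero>" and Vs = "\<lambda>_. ?V" and u = c])
    show "qf_equiv (tup as \<zero>) (tup (s n) \<zero>) ?V" for n by (rule qf)
    show "independent (tup as \<zero>) ?V c" by (rule indep)
    show "p \<cdot> tval U (tup as \<zero>) t = q \<cdot> tval U (tup as \<zero>) t'"
      if "tvars t \<subseteq> ?V" "tvars t' \<subseteq> ?V" "p \<cdot> tval U (tup (s n) \<zero>) t = q \<cdot> tval U (tup (s n') \<zero>) t'"
      for n n' t t' p q
      using tup_relations[OF ind \<open>s 0 = as\<close> that] .
  next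
    fix v assume "\<And>k j. cong_U k j v \<longleftrightarrow> cong_U k j c"
      and "\<And>n. n \<in> UNIV \<Longrightarrow> independent (tup (s n) \<zero>) ?V v"
      and "\<And>n m a t. n \<in> UNIV \<Longrightarrow> tvars t \<subseteq> ?V \<Longrightarrow> 1 \<le> m \<Longrightarrow> 1 \<le> a \<Longrightarrow>
        in_mult_P m (a \<cdot> v \<oplus> tval U (tup (s n) \<zero>) t) \<longleftrightarrow> in_mult_P m (a \<cdot> c \<oplus> tval U (tup as \<zero>) t)"
    then have "qf_equiv ((tup as \<zero>)(0 := c)) ((tup (s n) \<zero>)(0 := v)) (insert 0 ?V)" for n
      by (intro qf_equiv_extend_independent[OF qf _ indep]) simp_all
    then have "sat U \<phi> (tup (s n) v)" for n
      using sat_iff_if_qf_equiv[of "tup as c" "tup (s n) v" "insert 0 ?V" \<phi>] c fv by force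
    then show thesis by (rule that)
  qed
qed

end

theorem theorem3p3:
  fixes M :: "'a str" and e :: "int \<Rightarrow> 'a" and D :: "'a set"
    and U :: "'b str" and B :: "'b set" and \<phi> :: fm and as :: "'b list"
  assumes ext: "elem_ext_of_Z e M"
    and rand: "additively_random M e D"
    and symm: "\<forall>a. a \<in> D \<longleftrightarrow> s_neg M a \<in> D"
    and model: "elem_equiv (expand M D) U"
    and sat_U: "saturated_for U B"
    and fv_phi: "fv \<phi> \<subseteq> {..length as}"
    and div: "divides U B \<phi> as"
  shows "finite {c. sat U \<phi> (tup as c)}"
proof (rule ccontr)
  interpret saturated_random_Z_model M e D U B
    by unfold_locales (use ext model rand symm sat_U in auto)
  assume "infinite {c. sat U \<phi> (tup as c)}"
  obtain s where ind: "indiscernible U B (length as) s" and "s 0 = as"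
    and inconsistent: "\<not> (\<forall>N. finite N \<longrightarrow> (\<exists>c. \<forall>n\<in>N. sat U \<phi> (tup (s n) c)))"
    using div unfolding divides_def by blast
  obtain v where "\<And>n. sat U \<phi> (tup (s n) v)"
    using common_realisation[OF ind \<open>s 0 = as\<close> fv_phi \<open>infinite {c. sat U \<phi> (tup as c)}\<close>] by blast
  then show False using inconsistent by blast
qed

end
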